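(* Let $\sigma,\tau,\bar\sigma,\bar\tau$ satisfy the Standing Hypothesis and let $m,n$ be integers with $0<m\le n$. Then $$\{\sigma,m,n,\tau\,|\,\bar\sigma,m-1,\bar\tau\}-\{\sigma,n+1,m-1,\tau\,|\,\bar\sigma,m-1,\bar\tau\} =\{\sigma,m,n,\tau\,|\,\bar\sigma,m,\bar\tau\}+\{\sigma,n+1,m-1+\tau_1,\tau\backslash\tau_1\,|\,\bar\sigma,m,\bar\tau\backslash\bar\tau_1\},$$ where the second term on the right is omitted if $t=0$.
   Context: Overlap notation: for $\alpha=(\alpha_1,\dots,\alpha_L)$ with $\alpha_i\ge1$ and $\beta=(\beta_1,\dots,\beta_{L-1})$ with $0\le\beta_i\le\min\{\alpha_i,\alpha_{i+1}\}$, $(\alpha\,|\,\beta)$ is the skew diagram $\lambda/\mu$ (boxes $(i,j)$ with $\mu_i<j\le\lambda_i$, identified up to deleting empty rows/columns) with $L$ nonempty rows, $\lambda_i-\mu_i=\alpha_i$, $\lambda_{i+1}-\mu_i=\beta_i$ (row $i$ has $\alpha_i$ boxes, rows $i,i+1$ share $\beta_i$ columns); $\{\alpha\,|\,\beta\}=s_{\lambda/\mu}$ is its skew Schur function (generating function of semistandard Young tableaux of that shape). Commas denote concatenation of sequences. Standing Hypothesis: $\sigma=(\sigma_1,\dots,\sigma_s)$, $\tau=(\tau_1,\dots,\tau_t)$ compositions, $s,t\ge0$; $\bar\sigma,\bar\tau$ sequences of non-negative integers of lengths $s,t$; $\bar\sigma_s=1$ if $s>0$; $\bar\tau_1=1$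 if $t>0$; $\bar\sigma_i\le\min\{\sigma_i,\sigma_{i+1}\}$ ($1\le i<s$), $\bar\tau_i\le\min\{\tau_i,\tau_{i-1}\}$ ($1<i\le t$). $\sigma\backslash\sigma_s$ removes the last part of $\sigma$, $\tau\backslash\tau_1$ removes the first part of $\tau$, and similarly for $\bar\sigma\backslash\bar\sigma_s$, $\bar\tau\backslash\bar\tau_1$. *)

theory Defs
  imports Main
begin

(* Rows are indexed 0..L-1 (top to bottom, English
   notation), columns by integers.  ov_right a b i is the right end lambda_i of row i;
   row i occupies the columns lambda_i - a_i + 1 .. lambda_i, and
   lambda_{i+1} = mu_i + beta_i = lambda_i - a_i + beta_i.  Translation of the diagram
   is irrelevant (identification up to deleting empty rows/columns). *)
fun ov_right :: "nat list \<Rightarrow> nat list \<Rightarrow> nat \<Rightarrow> int" where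
  "ov_right a b 0 = 0"
| "ov_right a b (Suc i) = ov_right a b i - int (a ! i) + int (b ! i)"

definition ov_cells :: "nat list \<Rightarrow> nat list \<Rightarrow> (nat \<times> int) set" where
  "ov_cells a b = {(i, j). i < length a \<and> ov_right a b i - int (a ! i) < j \<and> j \<le> ov_right a b i}"

definition ov_valid :: "nat list \<Rightarrow> nat list \<Rightarrow> bool" where
  "ov_valid a b \<longleftrightarrow> length b + 1 = length a \<and>
     (\<forall>i < length b. b ! i \<le> min (a ! i) (a ! (i + 1)))"

definition ssyt :: "(nat \<times> int) set \<Rightarrow> nat \<Rightarrow> ((nat \<times> int) \<Rightarrow> nat) set" where
  "ssyt D N = {T. (\<forall>c \<in> D. T c \<in> {1..N}) \<and> (\<forall>c. c \<notin> D \<longrightarrow> T c = 0) \<and>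
     (\<forall>i j j'. (i, j) \<in> D \<and> (i, j') \<in> D \<and> j < j' \<longrightarrow> T (i, j) \<le> T (i, j')) \<and>
     (\<forall>i i' j. (i, j) \<in> D \<and> (i', j) \<in> D \<and> i < i' \<longrightarrow> T (i, j) < T (i', j))}"

definition skew_schur :: "(nat \<times> int) set \<Rightarrow> nat \<Rightarrow> (nat \<Rightarrow> 'r::comm_ring_1) \<Rightarrow> 'r" where
  "skew_schur D N x = (\<Sum>T \<in> ssyt D N. \<Prod>c \<in> D. x (T c))"

(* {alpha | beta}; by convention 0 if the overlap data is not admissible *)
definition ov_schur :: "nat list \<Rightarrow> nat list \<Rightarrow> nat \<Rightarrow> (nat \<Rightarrow> 'r::comm_ring_1) \<Rightarrow> 'r" where
  "ov_schur a b N x = (if ov_valid a b then skew_schur (ov_cells a b) N x else 0)"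

definition standing_hyp :: "nat list \<Rightarrow> nat list \<Rightarrow> nat list \<Rightarrow> nat list \<Rightarrow> bool" where
  "standing_hyp \<sigma> \<sigma>b \<tau> \<tau>b \<longleftrightarrow>
     (\<forall>k \<in> set \<sigma>. 1 \<le> k) \<and> (\<forall>k \<in> set \<tau>. 1 \<le> k) \<and>
     length \<sigma>b = length \<sigma> \<and> length \<tau>b = length \<tau> \<and>
     (\<sigma> \<noteq> [] \<longrightarrow> last \<sigma>b = 1) \<and> (\<tau> \<noteq> [] \<longrightarrow> hd \<tau>b = 1) \<and>
     (\<forall>i. i + 1 < length \<sigma> \<longrightarrow> \<sigma>b ! i \<le> min (\<sigma> ! i) (\<sigma> ! (i + 1))) \<and>
     (\<forall>i. 0 < i \<and> i < length \<tau> \<longrightarrow> \<tau>b ! i \<le> min (\<tau> ! i) (\<tau> ! (i - 1)))"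

end

theory Submission
  imports Defs "HOL-Library.Multiset"
begin

(* A semistandard tableau of an overlap shape is the same as the list of the multisets
   of entries of its rows, consecutive rows sharing c columns being compatible iff a counting
   condition col_strict c holds (Sections 1-3).  Cutting each shape of the identity at its two
   middle rows, every term becomes a sum over the outer rows of the weight of the admissible
   middle pairs (Section 4); as the outer overlaps are 1, the identity can be checked for fixed
   outer rows (Section 5).  There, a pair (a, b) of sizes (m, n) with overlap m - 1 has overlap
   m (third term) or is tight.  Moving the K = n + 1 - m entries of b counted by its excess over
   a into a is a weight-preserving bijection from tight pairs onto the pairs of sizes
   (n + 1, m - 1) with overlap m - 1 (second term).  It respects the compatibility of the lower
   row with the first row T of tau, except on the glued pairs, where the new lower row no longer
   fits above T; gluing T onto it gives the middle pairs of the last shape, whose row of length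
   m - 1 + tau_1 absorbs T. *)

(* 1. Cumulative counts.  A row of a tableau is recorded as the multiset of its entries; all
   conditions on rows are expressed through cumcount M x, the number of entries <= x of M. *)
definition cumcount :: "nat multiset \<Rightarrow> nat \<Rightarrow> nat" where
  "cumcount M x = size (filter_mset (\<lambda>y. y \<le> x) M)"

lemma cumcount_plus[simp]: "cumcount (P + Q) x = cumcount P x + cumcount Q x"
  by (simp add: cumcount_def)

lemma cumcount_empty[simp]: "cumcount {#} x = 0"
  by (simp add: cumcount_def)

lemma cumcount_le_size: "cumcount M x \<le> size M"
  by (simp add: cumcount_def size_filter_mset_lesseq)

lemma cumcount_mono: "x \<le> y \<Longrightarrow> cumcount M x \<le> cumcount M y"
  unfolding cumcount_def by (rule size_mset_mono) (rule filter_mset_mono_strong, auto)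

lemma cumcount_Suc: "cumcount M (Suc x) = cumcount M x + count M (Suc x)"
proof -
  have "filter_mset (\<lambda>y. y \<le> Suc x) M = filter_mset (\<lambda>y. y \<le> x) M + filter_mset (\<lambda>y. y = Suc x) M"
    by (induction M) auto
  moreover have "size (filter_mset (\<lambda>y. y = Suc x) M) = count M (Suc x)"
    by (simp add: filter_eq_replicate_mset)
  ultimately show ?thesis by (simp add: cumcount_def)
qed

lemma cumcount_0: "cumcount M 0 = count M 0"
proof -
  have "filter_mset (\<lambda>y. y \<le> 0) M = filter_mset (\<lambda>y. y = 0) M" by (rule filter_mset_cong) auto
  then show ?thesis by (simp add: cumcount_def filter_eq_replicate_mset)
qed

lemma cumcount_full: "(\<forall>y\<in>#M. y \<le> x) \<Longrightarrow> cumcount M x = size M"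
proof -
  assume "\<forall>y\<in>#M. y \<le> x"
  then have "filter_mset (\<lambda>y. y \<le> x) M = M" by (simp add: filter_mset_eq_conv)
  then show ?thesis by (simp add: cumcount_def)
qed

lemma cumcount_diff: "Q \<subseteq># P \<Longrightarrow> cumcount (P - Q) x = cumcount P x - cumcount Q x"
proof -
  assume "Q \<subseteq># P"
  then obtain R where "P = Q + R" by (metis subset_mset.add_diff_inverse)
  then show ?thesis by simp
qed

lemma mset_eq_by_cumcount: "(\<And>x. cumcount P x = cumcount Q x) \<Longrightarrow> P = Q"
proof (rule multiset_eqI)
  fix a assume h: "\<And>x. cumcount P x = cumcount Q x"
  show "count P a = count Q a"
  proof (cases a)
    case 0 then show ?thesis using h[of 0] by (simp add: cumcount_0)
  next
    case (Suc b) then show ?thesis using h[of b] h[of "Suc b"] by (simp add: cumcount_Suc)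
  qed
qed

lemma cumcount_replicate: "cumcount (replicate_mset k a) y = (if a \<le> y then k else 0)"
  by (induction k) (auto simp: cumcount_def)

(* The multiset with entries in {1..N} whose cumulative counts are a given monotone f with f 0 = 0
   (frozen at N): it is used to build the block of entries moved between two rows. *)
definition mset_of_cumcount :: "(nat \<Rightarrow> nat) \<Rightarrow> nat \<Rightarrow> nat multiset" where
  "mset_of_cumcount f N = (\<Sum>x<N. replicate_mset (f (Suc x) - f x) (Suc x))"

lemma cumcount_mset_of_cumcount: "mono f \<Longrightarrow> f 0 = 0 \<Longrightarrow> cumcount (mset_of_cumcount f N) y = f (min y N)"
proof (induction N)
  case 0 then show ?case by (simp add: mset_of_cumcount_def)
next
  case (Suc N)
  have "cumcount (replicate_mset (f (Suc N) - f N) (Suc N)) y = (if Suc N \<le> y then f (Suc N) - f N else 0)"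
    by (simp add: cumcount_replicate)
  moreover have "f N \<le> f (Suc N)" using Suc.prems by (simp add: mono_def)
  moreover have "f (min y N) \<le> f N" using Suc.prems by (simp add: mono_def)
  ultimately show ?case using Suc by (auto simp: mset_of_cumcount_def min_def)
qed

lemma set_mset_of_cumcount: "set_mset (mset_of_cumcount f N) \<subseteq> {1..N}"
  unfolding mset_of_cumcount_def by (induction N) (auto split: if_splits)

lemma cumcount_ge_N: "set_mset M \<subseteq> {1..N} \<Longrightarrow> N \<le> x \<Longrightarrow> cumcount M x = size M"
  by (rule cumcount_full) auto

lemma cumcount_0_bounded: "set_mset M \<subseteq> {1..N} \<Longrightarrow> cumcount M 0 = 0"
  by (auto simp: cumcount_0 count_eq_zero_iff)

lemma sorted_nth_le_iff_cumcount:
  "sorted xs \<Longrightarrow> j < length xs \<Longrightarrow> (xs!j \<le> y \<longleftrightarrow> j < cumcount (mset xs) y)"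
proof (induction xs arbitrary: j)
  case Nil then show ?case by simp
next
  case (Cons z zs)
  show ?case
  proof (cases "z \<le> y")
    case True
    have "cumcount (mset (z # zs)) y = Suc (cumcount (mset zs) y)" using True by (simp add: cumcount_def)
    then show ?thesis using Cons True by (cases j) auto
  next
    case False
    have "\<forall>w\<in>set zs. z \<le> w" using Cons.prems by simp
    then have "cumcount (mset (z # zs)) y = 0" using False by (auto simp: cumcount_def filter_mset_eq_conv)
    moreover have "z \<le> (z#zs)!j" using Cons.prems sorted_nth_mono[of "z#zs" 0 j] by simp
    ultimately show ?thesis using False by simp
  qed
qed

(* lies_above C T: every entry of C is at least every entry of T, i.e. C consists of the
   largest entries of T + C. *)
abbreviation lies_above :: "nat multiset \<Rightarrow> nat multiset \<Rightarrow> bool" where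
  "lies_above C T \<equiv> \<forall>c\<in>#C. \<forall>z\<in>#T. z \<le> c"

lemma cumcount_pos_ex: "1 \<le> cumcount C y \<Longrightarrow> \<exists>c\<in>#C. c \<le> y"
proof -
  assume "1 \<le> cumcount C y"
  moreover have "filter_mset (\<lambda>w. w \<le> y) C = {#} \<Longrightarrow> cumcount C y = 0" by (simp add: cumcount_def)
  ultimately have "filter_mset (\<lambda>w. w \<le> y) C \<noteq> {#}" by auto
  then obtain c where "c \<in># filter_mset (\<lambda>w. w \<le> y) C" by (meson multiset_nonemptyE)
  then show ?thesis by auto
qed

lemma cumcount_full_le: "cumcount T y = size T \<Longrightarrow> z \<in># T \<Longrightarrow> z \<le> y"
proof -
  assume h: "cumcount T y = size T" "z \<in># T"
  have "filter_mset (\<lambda>w. w \<le> y) T = T"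
  proof (rule ccontr)
    assume "filter_mset (\<lambda>w. w \<le> y) T \<noteq> T"
    then have "filter_mset (\<lambda>w. w \<le> y) T \<subset># T"
      using multiset_filter_subset[of "\<lambda>w. w \<le> y" T] by (simp add: subset_mset.le_neq_trans)
    then have "size (filter_mset (\<lambda>w. w \<le> y) T) < size T" by (rule mset_subset_size)
    then show False using h(1) by (simp add: cumcount_def)
  qed
  then have "z \<in># filter_mset (\<lambda>w. w \<le> y) T" using h(2) by simp
  then show ?thesis by simp
qed

lemma lies_above_cumcount_full:
  assumes "lies_above C T" "1 \<le> cumcount C y"
  shows "cumcount T y = size T"
proof -
  obtain c where "c \<in># C" "c \<le> y" using cumcount_pos_ex[OF assms(2)] by blast
  then have "\<forall>z\<in>#T. z \<le> y" using assms(1) by fastforce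
  then show ?thesis by (rule cumcount_full)
qed

lemma lies_above_if_full:
  assumes "\<And>y. 1 \<le> cumcount C y \<Longrightarrow> cumcount T y = size T"
  shows "lies_above C T"
proof (intro ballI)
  fix c z assume "c \<in># C" "z \<in># T"
  have "1 \<le> cumcount C c"
  proof -
    have "{#c#} \<subseteq># filter_mset (\<lambda>w. w \<le> c) C" using \<open>c \<in># C\<close> by simp
    then show ?thesis unfolding cumcount_def by (metis size_mset_mono size_single)
  qed
  then show "z \<le> c" using assms cumcount_full_le \<open>z \<in># T\<close> by blast
qed

lemma cumcount_lower_part:
  assumes "lies_above C T"
  shows "cumcount T x = min (size T) (cumcount (T + C) x)"
proof (cases "cumcount C x = 0")
  case True then show ?thesis using cumcount_le_size[of T x] by simp
next
  case False
  then have "cumcount T x = size T" using lies_above_cumcount_full[of C T x] assms by simp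
  then show ?thesis by simp
qed

(* A multiset splits in at most one way into a lower part of given size and an upper part
   lying above it; needed for the injectivity of gluing. *)
lemma lies_above_split_unique:
  fixes T C T' C' :: "nat multiset"
  assumes "T + C = T' + C'" "size T = size T'" "lies_above C T" "lies_above C' T'"
  shows "T = T' \<and> C = C'"
proof -
  have "cumcount T x = cumcount T' x" for x
  proof -
    have a: "cumcount T x = min (size T) (cumcount (T + C) x)" by (rule cumcount_lower_part[OF assms(3)])
    have b: "cumcount T' x = min (size T') (cumcount (T' + C') x)" by (rule cumcount_lower_part[OF assms(4)])
    show ?thesis by (simp only: a b assms(1,2))
  qed
  then have "T = T'" by (rule mset_eq_by_cumcount)
  then show ?thesis using assms(1) by (metis add_left_imp_eq)
qed

lemma sorted_split:
  fixes B :: "nat multiset"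
  assumes "k \<le> size B"
  shows "mset (take k (sorted_list_of_multiset B)) + mset (drop k (sorted_list_of_multiset B)) = B"
    "size (mset (take k (sorted_list_of_multiset B))) = k"
    "size (mset (drop k (sorted_list_of_multiset B))) = size B - k"
    "lies_above (mset (drop k (sorted_list_of_multiset B))) (mset (take k (sorted_list_of_multiset B)))"
    "set_mset (mset (take k (sorted_list_of_multiset B))) \<subseteq> set_mset B"
    "set_mset (mset (drop k (sorted_list_of_multiset B))) \<subseteq> set_mset B"
proof -
  let ?l = "sorted_list_of_multiset B"
  have len: "length ?l = size B" by (metis size_mset mset_sorted_list_of_multiset)
  show "mset (take k ?l) + mset (drop k ?l) = B" by (metis mset_append append_take_drop_id mset_sorted_list_of_multiset)
  show "size (mset (take k ?l)) = k" using len assms by simp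
  show "size (mset (drop k ?l)) = size B - k" using len by simp
  have "sorted (take k ?l @ drop k ?l)" by simp
  then have "\<forall>z\<in>set (take k ?l). \<forall>c\<in>set (drop k ?l). z \<le> c" unfolding sorted_append by blast
  then show "lies_above (mset (drop k ?l)) (mset (take k ?l))" by auto
  show "set_mset (mset (take k ?l)) \<subseteq> set_mset B" by (metis in_set_takeD set_mset_mset set_sorted_list_of_multiset subsetI)
  show "set_mset (mset (drop k ?l)) \<subseteq> set_mset B" by (metis in_set_dropD set_mset_mset set_sorted_list_of_multiset subsetI)
qed

(* 2. Column strictness between consecutive rows.  col_strict c X Y says that a row with entries X
   lies above a row with entries Y, the two rows sharing c columns (the first c cells of X
   above the last c cells of Y), and that the shared columns strictly increase. *)
definition col_strict :: "nat \<Rightarrow> nat multiset \<Rightarrow> nat multiset \<Rightarrow> bool" where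
  "col_strict c ta bo \<longleftrightarrow> (\<forall>x. cumcount bo (Suc x) + c \<le> cumcount ta x + size bo)"

lemma col_strict_sorted_pointwise:
  assumes sx: "sorted xs" and sy: "sorted ys" and c: "c \<le> length xs" "c \<le> length ys"
    and pos: "0 \<notin> set ys" and h: "col_strict c (mset xs) (mset ys)"
  shows "\<forall>j<c. xs!j < ys!(length ys - c + j)"
proof (intro allI impI)
  fix j assume j: "j < c"
  define y where "y = ys!(length ys - c + j)"
  have iy: "length ys - c + j < length ys" using j c by simp
  then have ypos: "y \<noteq> 0" using pos nth_mem unfolding y_def by metis
  show "xs!j < y"
  proof (rule ccontr)
    assume "\<not> xs!j < y"
    then have "\<not> xs!j \<le> y - 1" using ypos by simp
    then have cx: "cumcount (mset xs) (y - 1) \<le> j" using sorted_nth_le_iff_cumcount[OF sx, of j "y-1"] j c by simp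
    have "length ys - c + j < cumcount (mset ys) y" using sorted_nth_le_iff_cumcount[OF sy iy, of y] by (simp add: y_def)
    moreover have "cumcount (mset ys) (Suc (y - 1)) + c \<le> cumcount (mset xs) (y - 1) + size (mset ys)"
      using h by (simp add: col_strict_def)
    ultimately show False using cx ypos c by simp
  qed
qed

lemma col_strict_if_pointwise:
  assumes sx: "sorted xs" and sy: "sorted ys" and c: "c \<le> length xs" "c \<le> length ys"
    and h: "\<forall>j<c. xs!j < ys!(length ys - c + j)"
  shows "col_strict c (mset xs) (mset ys)"
  unfolding col_strict_def
proof
  fix x
  define d where "d = cumcount (mset ys) (Suc x)"
  have dle: "d \<le> length ys" using cumcount_le_size[of "mset ys" "Suc x"] by (simp add: d_def)
  show "cumcount (mset ys) (Suc x) + c \<le> cumcount (mset xs) x + size (mset ys)"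
  proof (cases "d + c \<le> length ys")
    case True then show ?thesis by (simp add: d_def)
  next
    case False
    (* the e-th of the last c entries of ys is its d-th entry, which is at most Suc x *)
    define e where "e = d - (length ys - c)"
    have e1: "1 \<le> e" "e \<le> c" using False dle c by (auto simp: e_def)
    have ide: "length ys - c + (e - 1) = d - 1" using False e1 by (simp add: e_def)
    have "d - 1 < length ys" "d - 1 < d" using False dle c by linarith+
    then have "ys!(d-1) \<le> Suc x" using sorted_nth_le_iff_cumcount[OF sy, of "d-1" "Suc x"] by (simp add: d_def)
    moreover have "xs!(e-1) < ys!(d-1)" using h e1 ide by (metis diff_less less_le_trans zero_less_one)
    ultimately have "xs!(e-1) \<le> x" by simp
    then have "e - 1 < cumcount (mset xs) x" using sorted_nth_le_iff_cumcount[OF sx, of "e-1" x] e1 c by simp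
    then show ?thesis using c False e1 by (simp add: d_def e_def)
  qed
qed

lemma col_strict_1_iff: "col_strict 1 X T \<longleftrightarrow> (\<forall>x. cumcount T (Suc x) = size T \<longrightarrow> 1 \<le> cumcount X x)"
proof
  assume h: "col_strict 1 X T"
  show "\<forall>x. cumcount T (Suc x) = size T \<longrightarrow> 1 \<le> cumcount X x"
  proof (intro allI impI)
    fix x assume "cumcount T (Suc x) = size T"
    moreover have "cumcount T (Suc x) + 1 \<le> cumcount X x + size T" using h by (simp add: col_strict_def)
    ultimately show "1 \<le> cumcount X x" by simp
  qed
next
  assume h: "\<forall>x. cumcount T (Suc x) = size T \<longrightarrow> 1 \<le> cumcount X x"
  show "col_strict 1 X T" unfolding col_strict_def
  proof
    fix x
    have c: "cumcount T (Suc x) \<le> size T" by (rule cumcount_le_size)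
    show "cumcount T (Suc x) + 1 \<le> cumcount X x + size T"
    proof (cases "cumcount T (Suc x) = size T")
      case True then show ?thesis using h by simp
    next
      case False then show ?thesis using c by simp
    qed
  qed
qed

(* A virtual row {#0#} above imposes no condition; used when sigma is empty. *)
lemma col_strict_zero_row: "col_strict 1 {#0#} A"
  by (simp add: col_strict_def cumcount_def)

lemma col_strict_zero_row': "col_strict (Suc 0) {#0#} A"
  using col_strict_zero_row by simp

lemma col_strict_mono: "col_strict c A B \<Longrightarrow> c' \<le> c \<Longrightarrow> col_strict c' A B"
  unfolding col_strict_def by (meson add_le_mono le_refl order_trans)

lemma not_col_strict_empty:
  assumes "T \<noteq> {#}" "set_mset T \<subseteq> {1..N}"
  shows "\<not> col_strict 1 {#} T"
proof
  assume "col_strict 1 {#} T"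
  then have "cumcount T (Suc N) + 1 \<le> cumcount {#} N + size T" by (simp add: col_strict_def)
  moreover have "cumcount T (Suc N) = size T" using cumcount_ge_N[OF assms(2)] by simp
  ultimately show False by simp
qed

lemma col_strict_add_above:
  assumes "col_strict e T R" "lies_above C T"
  shows "col_strict e (T + C) R"
  unfolding col_strict_def
proof
  fix x
  have h: "cumcount R (Suc x) + e \<le> cumcount T x + size R" using assms(1) by (simp add: col_strict_def)
  then show "cumcount R (Suc x) + e \<le> cumcount (T + C) x + size R" by simp
qed

lemma col_strict_remove_above:
  assumes "col_strict e (T + C) R" "lies_above C T" "e \<le> size T"
  shows "col_strict e T R"
  unfolding col_strict_def
proof
  fix x
  have h: "cumcount R (Suc x) + e \<le> cumcount T x + cumcount C x + size R" using assms(1) by (simp add: col_strict_def)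
  show "cumcount R (Suc x) + e \<le> cumcount T x + size R"
  proof (cases "cumcount C x = 0")
    case True then show ?thesis using h by simp
  next
    case False
    then have "cumcount T x = size T" using lies_above_cumcount_full[of C T x] assms(2) by simp
    then show ?thesis using assms(3) cumcount_le_size[of R "Suc x"] by simp
  qed
qed

(* 3. Row encoding of tableaux.  fillings a b N are the lists of rows (multisets with entries in
   {1..N}, row i of size a ! i) such that consecutive rows satisfy the overlap conditions b;
   they are in weight-preserving bijection with the semistandard tableaux of the overlap shape
   (a | b), so {a | b} is the sum of their weights. *)
definition fillings :: "nat list \<Rightarrow> nat list \<Rightarrow> nat \<Rightarrow> nat multiset list set" where
  "fillings a b N = {Rs. length Rs = length a \<and> (\<forall>i<length a. size (Rs!i) = a!i \<and> set_mset (Rs!i) \<subseteq> {1..N})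
      \<and> (\<forall>i<length b. col_strict (b!i) (Rs!i) (Rs!(Suc i)))}"

definition mweight :: "(nat \<Rightarrow> 'r::comm_ring_1) \<Rightarrow> nat multiset \<Rightarrow> 'r" where
  "mweight x M = prod_mset (image_mset x M)"

definition rweight :: "(nat \<Rightarrow> 'r::comm_ring_1) \<Rightarrow> nat multiset list \<Rightarrow> 'r" where
  "rweight x Rs = prod_list (map (mweight x) Rs)"

lemma mweight_plus: "mweight x (P + Q) = mweight x P * mweight x Q"
  by (simp add: mweight_def)

(* Within a valid overlap shape: row i occupies the columns mu i + 1 .. lam i, and both ends
   move weakly to the left from one row to the next. *)
locale overlap_shape =
  fixes a b :: "nat list"
  assumes valid: "ov_valid a b"
begin

abbreviation "lam i \<equiv> ov_right a b i"
definition "mu i = ov_right a b i - int (a!i)"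

lemma lenb: "length b + 1 = length a" using valid by (simp add: ov_valid_def)

lemma bnd: "i < length b \<Longrightarrow> b!i \<le> a!i \<and> b!i \<le> a!(Suc i)"
  using valid by (simp add: ov_valid_def)

lemma lam_Suc: "lam (Suc i) = mu i + int (b!i)"
  by (simp add: mu_def)

lemma mu_Suc: "mu (Suc i) = mu i + int (b!i) - int (a!(Suc i))"
  by (simp add: mu_def)

lemma bounds_step: "i < length b \<Longrightarrow> lam (Suc i) \<le> lam i \<and> mu (Suc i) \<le> mu i"
  using bnd[of i] by (simp add: mu_Suc lam_Suc)

lemma bounds_antimono: "i \<le> i' \<Longrightarrow> i' < length a \<Longrightarrow> lam i' \<le> lam i \<and> mu i' \<le> mu i"
proof (induction i' rule: dec_induct)
  case base then show ?case by simp
next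
  case (step k)
  have "k < length b" using step lenb by simp
  then show ?case using step bounds_step[of k] by auto
qed

lemma cells_eq: "ov_cells a b = {(i,j). i < length a \<and> mu i < j \<and> j \<le> lam i}"
  by (simp add: ov_cells_def mu_def)

lemma cell_in: "i < length a \<Longrightarrow> j < a!i \<Longrightarrow> (i, mu i + 1 + int j) \<in> ov_cells a b"
  by (simp add: cells_eq mu_def)

lemma cells_column_convex:
  assumes "(i,c) \<in> ov_cells a b" "(i',c) \<in> ov_cells a b" "i < i'"
  shows "(Suc i, c) \<in> ov_cells a b"
proof -
  have "Suc i \<le> i'" "i' < length a" using assms by (auto simp: cells_eq)
  then have "lam i' \<le> lam (Suc i)" "mu (Suc i) \<le> mu i" using bounds_antimono[of "Suc i" i'] bounds_antimono[of i "Suc i"] by auto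
  then show ?thesis using assms \<open>Suc i \<le> i'\<close> \<open>i' < length a\<close> by (auto simp: cells_eq)
qed

definition row_entries :: "(nat \<times> int \<Rightarrow> nat) \<Rightarrow> nat \<Rightarrow> nat list" where
  "row_entries T i = map (\<lambda>j. T (i, mu i + 1 + int j)) [0..<a!i]"

definition rows_of :: "(nat \<times> int \<Rightarrow> nat) \<Rightarrow> nat multiset list" where
  "rows_of T = map (\<lambda>i. mset (row_entries T i)) [0..<length a]"

lemma row_entries_length[simp]: "length (row_entries T i) = a!i" by (simp add: row_entries_def)

lemma row_entries_nth: "j < a!i \<Longrightarrow> row_entries T i ! j = T (i, mu i + 1 + int j)" by (simp add: row_entries_def)

context
  fixes N :: nat and T
  assumes T: "T \<in> ssyt (ov_cells a b) N"
begin

lemma T_range: "c \<in> ov_cells a b \<Longrightarrow> T c \<in> {1..N}" using T by (simp add: ssyt_def)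

lemma T_row: "(i,j) \<in> ov_cells a b \<Longrightarrow> (i,j') \<in> ov_cells a b \<Longrightarrow> j < j' \<Longrightarrow> T (i,j) \<le> T (i,j')"
  using T by (simp add: ssyt_def)

lemma T_col: "(i,j) \<in> ov_cells a b \<Longrightarrow> (i',j) \<in> ov_cells a b \<Longrightarrow> i < i' \<Longrightarrow> T (i,j) < T (i',j)"
  using T by (simp add: ssyt_def)

lemma row_entries_sorted: "i < length a \<Longrightarrow> sorted (row_entries T i)"
  unfolding sorted_iff_nth_mono_less by (auto simp: row_entries_nth intro!: T_row cell_in)

lemma row_entries_set: "i < length a \<Longrightarrow> set (row_entries T i) \<subseteq> {1..N}"
  using T_range cell_in by (auto simp: row_entries_def)

lemma rows_of_in: "rows_of T \<in> fillings a b N"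
proof -
  have col_strict: "col_strict (b!i) (mset (row_entries T i)) (mset (row_entries T (Suc i)))" if i: "i < length b" for i
  proof -
    have ia: "i < length a" "Suc i < length a" using i lenb by auto
    have "(\<forall>j<b!i. row_entries T i ! j < row_entries T (Suc i) ! (length (row_entries T (Suc i)) - b!i + j))"
    proof (intro allI impI)
      fix j assume j: "j < b!i"
      have j1: "j < a!i" "a!(Suc i) - b!i + j < a!(Suc i)" using j bnd[OF i] by auto
      have col: "mu (Suc i) + 1 + int (a!(Suc i) - b!i + j) = mu i + 1 + int j"
        using bnd[OF i] by (simp add: mu_Suc of_nat_diff)
      have c2: "(Suc i, mu i + 1 + int j) \<in> ov_cells a b"
        using cell_in[OF ia(2) j1(2)] by (simp only: col)
      show "row_entries T i ! j < row_entries T (Suc i) ! (length (row_entries T (Suc i)) - b!i + j)"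
      proof -
        have r2: "row_entries T (Suc i) ! (a!(Suc i) - b!i + j) = T (Suc i, mu i + 1 + int j)"
          by (simp only: row_entries_nth[OF j1(2)] col)
        show ?thesis using T_col[OF cell_in[OF ia(1) j1(1)] c2] r2 row_entries_nth[OF j1(1)] by simp
      qed
    qed
    then show ?thesis using col_strict_if_pointwise[OF row_entries_sorted[OF ia(1)] row_entries_sorted[OF ia(2)]] bnd[OF i] by simp
  qed
  show ?thesis unfolding fillings_def rows_of_def using col_strict row_entries_set lenb
    by (auto simp: subset_iff)
qed

end

lemma cell_coords: "(i,c) \<in> ov_cells a b \<Longrightarrow> nat (c - mu i - 1) < a!i \<and> c = mu i + 1 + int (nat (c - mu i - 1)) \<and> i < length a"
  by (auto simp: cells_eq mu_def)

lemma sorted_mset_eq: "sorted xs \<Longrightarrow> sorted ys \<Longrightarrow> mset xs = mset ys \<Longrightarrow> xs = ys"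
  by (metis properties_for_sort sorted_sort_id)

(* A tableau is determined by its rows, since rows are sorted. *)
lemma rows_of_inj: "inj_on rows_of (ssyt (ov_cells a b) N)"
proof (rule inj_onI)
  fix T1 T2 assume T1: "T1 \<in> ssyt (ov_cells a b) N" and T2: "T2 \<in> ssyt (ov_cells a b) N" and eq: "rows_of T1 = rows_of T2"
  have rows: "row_entries T1 i = row_entries T2 i" if i: "i < length a" for i
  proof -
    have "rows_of T1 ! i = rows_of T2 ! i" using eq by simp
    then have "mset (row_entries T1 i) = mset (row_entries T2 i)" using i by (simp add: rows_of_def)
    then show ?thesis using row_entries_sorted[OF T1 i] row_entries_sorted[OF T2 i] sorted_mset_eq by blast
  qed
  show "T1 = T2"
  proof
    fix p :: "nat \<times> int"
    obtain i c where p: "p = (i,c)" by (cases p)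
    show "T1 p = T2 p"
    proof (cases "(i,c) \<in> ov_cells a b")
      case True
      define j where "j = nat (c - mu i - 1)"
      have j: "j < a!i" "c = mu i + 1 + int j" "i < length a" using cell_coords[OF True] by (auto simp: j_def)
      have "T1 (i,c) = row_entries T1 i ! j" using j by (simp add: row_entries_nth)
      also have "\<dots> = row_entries T2 i ! j" using rows j by simp
      also have "\<dots> = T2 (i,c)" using j by (simp add: row_entries_nth)
      finally show ?thesis using p by simp
    next
      case False then show ?thesis using T1 T2 p by (simp add: ssyt_def)
    qed
  qed
qed

context
  fixes N Rs
  assumes Rs: "Rs \<in> fillings a b N"
begin

definition "sorted_row i = sorted_list_of_multiset (Rs!i)"
definition "tableau_of p = (if p \<in> ov_cells a b then sorted_row (fst p) ! nat (snd p - mu (fst p) - 1) else 0)"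

lemma sorted_row_props: "i < length a \<Longrightarrow> length (sorted_row i) = a!i \<and> sorted (sorted_row i) \<and> set (sorted_row i) \<subseteq> {1..N} \<and> mset (sorted_row i) = Rs!i"
proof -
  assume i: "i < length a"
  have "size (Rs!i) = a!i" "set_mset (Rs!i) \<subseteq> {1..N}" using Rs i by (auto simp: fillings_def)
  moreover have "length (sorted_list_of_multiset M) = size M" for M :: "nat multiset"
    by (metis size_mset mset_sorted_list_of_multiset)
  ultimately show ?thesis by (simp add: sorted_row_def)
qed

lemma tableau_of_cell: "(i,c) \<in> ov_cells a b \<Longrightarrow> tableau_of (i,c) = sorted_row i ! nat (c - mu i - 1)"
  by (simp add: tableau_of_def)

lemma tableau_of_col:
  assumes c1: "(i,c) \<in> ov_cells a b" and c2: "(Suc i, c) \<in> ov_cells a b"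
  shows "tableau_of (i,c) < tableau_of (Suc i, c)"
proof -
  have ia: "Suc i < length a" using c2 by (simp add: cells_eq)
  then have ib: "i < length b" using lenb by simp
  define j where "j = nat (c - mu i - 1)"
  have jb: "j < b!i" using c1 c2 by (auto simp: cells_eq j_def mu_def)
  have idx: "nat (c - mu (Suc i) - 1) = a!(Suc i) - b!i + j"
    using c1 c2 bnd[OF ib] by (auto simp: cells_eq j_def mu_Suc)
  have P1: "length (sorted_row i) = a!i" "sorted (sorted_row i)" "mset (sorted_row i) = Rs!i" using sorted_row_props[of i] ia by auto
  have P2: "length (sorted_row (Suc i)) = a!(Suc i)" "sorted (sorted_row (Suc i))" "mset (sorted_row (Suc i)) = Rs!(Suc i)"
    "set (sorted_row (Suc i)) \<subseteq> {1..N}" using sorted_row_props[OF ia] by auto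
  have z: "0 \<notin> set (sorted_row (Suc i))" using P2(4) by auto
  have "col_strict (b!i) (Rs!i) (Rs!(Suc i))" using Rs ib by (simp add: fillings_def)
  then have "\<forall>j<b!i. sorted_row i ! j < sorted_row (Suc i) ! (length (sorted_row (Suc i)) - b!i + j)"
    using col_strict_sorted_pointwise[OF P1(2) P2(2) _ _ z] P1 P2 bnd[OF ib] by simp
  then show ?thesis using jb idx P2(1) by (simp add: tableau_of_cell c1 c2 j_def)
qed

lemma tableau_of_ssyt: "tableau_of \<in> ssyt (ov_cells a b) N"
proof -
  have range: "tableau_of c \<in> {1..N}" if "c \<in> ov_cells a b" for c
  proof -
    obtain i cc where c: "c = (i,cc)" by (cases c)
    have "nat (cc - mu i - 1) < a!i" "i < length a" using cell_coords that c by auto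
    then have "sorted_row i ! nat (cc - mu i - 1) \<in> set (sorted_row i)" using sorted_row_props[of i] by simp
    then show ?thesis using sorted_row_props[of i] c that \<open>i < length a\<close> by (auto simp: tableau_of_cell)
  qed
  have outside: "tableau_of c = 0" if "c \<notin> ov_cells a b" for c using that by (simp add: tableau_of_def)
  have row: "tableau_of (i,j) \<le> tableau_of (i,j')" if "(i,j) \<in> ov_cells a b" "(i,j') \<in> ov_cells a b" "j < j'" for i j j'
  proof -
    have "nat (j' - mu i - 1) < a!i" "i < length a" using cell_coords that by auto
    moreover have "nat (j - mu i - 1) \<le> nat (j' - mu i - 1)" using that by simp
    ultimately show ?thesis using sorted_row_props[of i] that by (auto simp: tableau_of_cell intro: sorted_nth_mono)
  qed
  have col: "tableau_of (i,j) < tableau_of (i',j)" if "(i,j) \<in> ov_cells a b" "(i',j) \<in> ov_cells a b" "i < i'" for i i' j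
    using that
  proof (induction "i' - i" arbitrary: i)
    case 0 then show ?case by simp
  next
    case (Suc d)
    have s1: "(Suc i, j) \<in> ov_cells a b" using cells_column_convex Suc.prems by blast
    have a1: "tableau_of (i,j) < tableau_of (Suc i, j)" using tableau_of_col Suc.prems(1) s1 by blast
    show ?case
    proof (cases "Suc i = i'")
      case True then show ?thesis using a1 by simp
    next
      case False
      then have "tableau_of (Suc i, j) < tableau_of (i', j)" using Suc s1 by simp
      then show ?thesis using a1 by simp
    qed
  qed
  show ?thesis unfolding ssyt_def using range outside row col by blast
qed

lemma rows_of_tableau_of: "rows_of tableau_of = Rs"
proof (rule nth_equalityI)
  show "length (rows_of tableau_of) = length Rs" using Rs by (simp add: rows_of_def fillings_def)
next
  fix i assume "i < length (rows_of tableau_of)"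
  then have i: "i < length a" by (simp add: rows_of_def)
  have "row_entries tableau_of i = sorted_row i"
  proof (rule nth_equalityI)
    show "length (row_entries tableau_of i) = length (sorted_row i)" using sorted_row_props[OF i] by simp
  next
    fix j assume "j < length (row_entries tableau_of i)"
    then have j: "j < a!i" by simp
    show "row_entries tableau_of i ! j = sorted_row i ! j" using cell_in[OF i j] j by (simp add: row_entries_nth tableau_of_cell)
  qed
  then show "rows_of tableau_of ! i = Rs ! i" using i sorted_row_props[OF i] by (simp add: rows_of_def)
qed

end

lemma rows_of_bij: "bij_betw rows_of (ssyt (ov_cells a b) N) (fillings a b N)"
proof -
  have "rows_of ` ssyt (ov_cells a b) N = fillings a b N"
  proof
    show "rows_of ` ssyt (ov_cells a b) N \<subseteq> fillings a b N" using rows_of_in by blast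
    show "fillings a b N \<subseteq> rows_of ` ssyt (ov_cells a b) N"
      using rows_of_tableau_of tableau_of_ssyt by (metis image_eqI subsetI)
  qed
  then show ?thesis using rows_of_inj by (simp add: bij_betw_def)
qed

lemma cells_enum_bij:
  "bij_betw (\<lambda>(i, j). (i, mu i + 1 + int j)) (SIGMA i:{..<length a}. {..<a!i}) (ov_cells a b)"
proof (rule bij_betw_imageI)
  show "inj_on (\<lambda>(i, j). (i, mu i + 1 + int j)) (SIGMA i:{..<length a}. {..<a!i})"
    by (auto simp: inj_on_def)
  show "(\<lambda>(i, j). (i, mu i + 1 + int j)) ` (SIGMA i:{..<length a}. {..<a!i}) = ov_cells a b"
  proof
    show "(\<lambda>(i, j). (i, mu i + 1 + int j)) ` (SIGMA i:{..<length a}. {..<a!i}) \<subseteq> ov_cells a b"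
      using cell_in by auto
    show "ov_cells a b \<subseteq> (\<lambda>(i, j). (i, mu i + 1 + int j)) ` (SIGMA i:{..<length a}. {..<a!i})"
    proof clarify
      fix i c assume "(i, c) \<in> ov_cells a b"
      then show "(i, c) \<in> (\<lambda>(i, j). (i, mu i + 1 + int j)) ` (SIGMA i:{..<length a}. {..<a!i})"
        using cell_coords[of i c] by (auto intro!: image_eqI[where x = "(i, nat (c - mu i - 1))"])
    qed
  qed
qed

lemma mweight_row_entries: "mweight x (mset (row_entries T i)) = (\<Prod>j<a!i. x (T (i, mu i + 1 + int j)))"
proof -
  have "mweight x (mset (row_entries T i)) = prod_list (map x (row_entries T i))"
    by (simp add: mweight_def prod_mset_prod_list[symmetric])
  also have "\<dots> = (\<Prod>j<a!i. x (T (i, mu i + 1 + int j)))"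
    by (simp add: row_entries_def comp_def prod.distinct_set_conv_list[symmetric] atLeast0LessThan)
  finally show ?thesis .
qed

lemma rweight_rows_of: "rweight x (rows_of T) = (\<Prod>i<length a. mweight x (mset (row_entries T i)))"
  by (simp add: rweight_def rows_of_def comp_def prod.distinct_set_conv_list[symmetric] atLeast0LessThan)

lemma weight_rows_of:
  fixes x :: "nat \<Rightarrow> 'r::comm_ring_1"
  shows "(\<Prod>c\<in>ov_cells a b. x (T c)) = rweight x (rows_of T)"
proof -
  let ?S = "SIGMA i:{..<length a}. {..<a!i}"
  have "(\<Prod>c\<in>ov_cells a b. x (T c)) = (\<Prod>p\<in>?S. x (T ((\<lambda>(i, j). (i, mu i + 1 + int j)) p)))"
    by (rule prod.reindex_bij_betw[OF cells_enum_bij, symmetric])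
  also have "\<dots> = (\<Prod>(i, j)\<in>?S. x (T (i, mu i + 1 + int j)))"
    by (rule prod.cong) auto
  also have "\<dots> = (\<Prod>i<length a. \<Prod>j<a!i. x (T (i, mu i + 1 + int j)))"
    by (rule prod.Sigma[symmetric]) auto
  finally show ?thesis by (simp add: rweight_rows_of mweight_row_entries)
qed

lemma skew_schur_fillings:
  fixes x :: "nat \<Rightarrow> 'r::comm_ring_1"
  shows "skew_schur (ov_cells a b) N x = (\<Sum>Rs\<in>fillings a b N. rweight x Rs)"
proof -
  have "skew_schur (ov_cells a b) N x = (\<Sum>T\<in>ssyt (ov_cells a b) N. rweight x (rows_of T))"
    unfolding skew_schur_def by (rule sum.cong) (auto simp: weight_rows_of)
  also have "\<dots> = (\<Sum>Rs\<in>fillings a b N. rweight x Rs)"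
    by (rule sum.reindex_bij_betw[OF rows_of_bij])
  finally show ?thesis .
qed

end

lemma fillings_length: "Rs \<in> fillings a b N \<Longrightarrow> length Rs = length a"
  by (simp add: fillings_def)

lemma finite_bounded_msets: "finite {R :: nat multiset. set_mset R \<subseteq> {1..N} \<and> size R \<le> S}"
proof -
  have "{R :: nat multiset. set_mset R \<subseteq> {1..N} \<and> size R \<le> S} = (\<Union>p\<in>{..S}. multisets_of_size {1..N} p)"
    by (auto simp: multisets_of_size_def)
  then show ?thesis by auto
qed

lemma finite_fillings: "finite (fillings a b N)"
proof (rule finite_subset)
  let ?M = "{R :: nat multiset. set_mset R \<subseteq> {1..N} \<and> size R \<le> sum_list a}"
  show "fillings a b N \<subseteq> {xs. set xs \<subseteq> ?M \<and> length xs = length a}"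
  proof
    fix Rs assume h: "Rs \<in> fillings a b N"
    have "set Rs \<subseteq> ?M"
    proof
      fix R assume "R \<in> set Rs"
      then obtain i where i: "i < length Rs" "R = Rs!i" by (metis in_set_conv_nth)
      then show "R \<in> ?M" using h elem_le_sum_list[of i a] by (auto simp: fillings_def)
    qed
    then show "Rs \<in> {xs. set xs \<subseteq> ?M \<and> length xs = length a}" using h by (simp add: fillings_def)
  qed
  show "finite {xs. set xs \<subseteq> ?M \<and> length xs = length a}"
    by (rule finite_lists_length_eq) (rule finite_bounded_msets)
qed

(* 4. Cutting a filling of the shape s @ [p,q] @ t at its two middle rows.  The overlap list
   sb @ [c] @ tb has length sb = length s: the last entry of sb is the overlap of the last row
   of s with the row of length p, and the head of tb that of the row of length q with the first
   row of t. *)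
definition upper_fillings :: "nat list \<Rightarrow> nat list \<Rightarrow> nat \<Rightarrow> nat multiset list set" where
  "upper_fillings s sb N = (if s = [] then {[]} else fillings s (butlast sb) N)"

definition lower_fillings :: "nat list \<Rightarrow> nat list \<Rightarrow> nat \<Rightarrow> nat multiset list set" where
  "lower_fillings t tb N = (if t = [] then {[]} else fillings t (tl tb) N)"

(* The admissible middle rows (A, B) between given upper rows Rs and lower rows Rt; e1 and e2
   are the overlaps with the neighbouring rows.  middle_weight is their generating function. *)
definition middle_pairs :: "nat \<Rightarrow> nat \<Rightarrow> nat \<Rightarrow> nat \<Rightarrow> nat \<Rightarrow> nat \<Rightarrow> nat multiset list \<Rightarrow> nat multiset list
    \<Rightarrow> (nat multiset \<times> nat multiset) set" where
  "middle_pairs p q c e1 e2 N Rs Rt = {(A,B). size A = p \<and> size B = q \<and> set_mset A \<subseteq> {1..N} \<and> set_mset B \<subseteq> {1..N}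
     \<and> col_strict c A B \<and> (Rs = [] \<or> col_strict e1 (last Rs) A) \<and> (Rt = [] \<or> col_strict e2 B (hd Rt))}"

definition middle_weight :: "(nat \<Rightarrow> 'r::comm_ring_1) \<Rightarrow> nat \<Rightarrow> nat \<Rightarrow> nat \<Rightarrow> nat \<Rightarrow> nat \<Rightarrow> nat
    \<Rightarrow> nat multiset list \<Rightarrow> nat multiset list \<Rightarrow> 'r" where
  "middle_weight x p q c e1 e2 N Rs Rt = (\<Sum>AB\<in>middle_pairs p q c e1 e2 N Rs Rt. mweight x (fst AB + snd AB))"

lemma upper_fillings_length: "Rs \<in> upper_fillings s sb N \<Longrightarrow> length Rs = length s"
  by (auto simp: upper_fillings_def fillings_def split: if_splits)

lemma lower_fillings_length: "Rt \<in> lower_fillings t tb N \<Longrightarrow> length Rt = length t"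
  by (auto simp: lower_fillings_def fillings_def split: if_splits)

lemma finite_upper_fillings: "finite (upper_fillings s sb N)"
  by (simp add: upper_fillings_def finite_fillings)

lemma finite_lower_fillings: "finite (lower_fillings t tb N)"
  by (simp add: lower_fillings_def finite_fillings)

lemma finite_middle_pairs: "finite (middle_pairs p q c e1 e2 N Rs Rt)"
proof (rule finite_subset)
  show "middle_pairs p q c e1 e2 N Rs Rt \<subseteq> multisets_of_size {1..N} p \<times> multisets_of_size {1..N} q"
    by (auto simp: middle_pairs_def multisets_of_size_def)
qed auto

lemma fillings_Cons:
  assumes "a \<noteq> []"
  shows "R # Rs \<in> fillings (k # a) (c # b) N \<longleftrightarrow>
    size R = k \<and> set_mset R \<subseteq> {1..N} \<and> col_strict c R (hd Rs) \<and> Rs \<in> fillings a b N"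
proof -
  have "length Rs = length a \<Longrightarrow> hd Rs = Rs ! 0" using assms by (cases Rs) auto
  then show ?thesis using assms by (auto simp: fillings_def All_less_Suc2)
qed

lemma fillings_single: "Rs \<in> fillings [k] [] N \<longleftrightarrow> (\<exists>R. Rs = [R] \<and> size R = k \<and> set_mset R \<subseteq> {1..N})"
  by (auto simp: fillings_def length_Suc_conv)

lemma fillings_append:
  assumes "length Rs1 = length a1" "a1 \<noteq> []" "a2 \<noteq> []" "length b1 + 1 = length a1"
  shows "Rs1 @ Rs2 \<in> fillings (a1 @ a2) (b1 @ [c] @ b2) N \<longleftrightarrow>
    Rs1 \<in> fillings a1 b1 N \<and> Rs2 \<in> fillings a2 b2 N \<and> col_strict c (last Rs1) (hd Rs2)"
  using assms
proof (induction Rs1 arbitrary: a1 b1)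
  case Nil then show ?case by simp
next
  case (Cons R Rs1)
  obtain k a1' where a1: "a1 = k # a1'" using Cons.prems(2) by (cases a1) auto
  show ?case
  proof (cases "Rs1 = []")
    case True
    then have "a1' = []" "b1 = []" using Cons.prems a1 by auto
    then show ?thesis using True a1 Cons.prems(3) by (auto simp: fillings_Cons fillings_single)
  next
    case False
    obtain c' b1' where b1: "b1 = c' # b1'" using Cons.prems(1,4) a1 False by (cases b1) auto
    have ne: "a1' \<noteq> []" using Cons.prems(1) a1 False by auto
    have IH: "Rs1 @ Rs2 \<in> fillings (a1' @ a2) (b1' @ [c] @ b2) N \<longleftrightarrow>
      Rs1 \<in> fillings a1' b1' N \<and> Rs2 \<in> fillings a2 b2 N \<and> col_strict c (last Rs1) (hd Rs2)"
      using Cons.IH[of a1' b1'] Cons.prems a1 b1 ne by simp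
    show ?thesis using False ne IH unfolding a1 b1 by (simp add: fillings_Cons)
  qed
qed

lemma lower_fillings_Cons_iff:
  assumes ne: "t \<noteq> []" and L: "length tb = length t"
  shows "R # Rs \<in> lower_fillings t tb N \<longleftrightarrow> size R = hd t \<and> set_mset R \<subseteq> {1..N}
     \<and> Rs \<in> lower_fillings (tl t) (tl tb) N \<and> (Rs = [] \<or> col_strict (hd (tl tb)) R (hd Rs))"
proof -
  obtain t1 t' where t: "t = t1 # t'" using ne by (cases t) auto
  obtain e0 bb where tb: "tb = e0 # bb" using L ne t by (cases tb) auto
  show ?thesis
  proof (cases "t' = []")
    case True then show ?thesis using t tb L by (auto simp: fillings_single lower_fillings_def)
  next
    case False
    then obtain e bb' where "bb = e # bb'" using L t tb by (cases bb) auto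
    then show ?thesis using t tb False
      by (auto simp: fillings_Cons lower_fillings_def dest: fillings_length)
  qed
qed

lemma fillings_middle_iff:
  assumes L: "length sb = length s" "length tb = length t" "length Rs = length s" "length Rt = length t"
  shows "Rs @ [A,B] @ Rt \<in> fillings (s @ [p,q] @ t) (sb @ [c] @ tb) N \<longleftrightarrow>
    Rs \<in> upper_fillings s sb N \<and> Rt \<in> lower_fillings t tb N \<and> (A,B) \<in> middle_pairs p q c (last sb) (hd tb) N Rs Rt"
proof -
  have lower: "[A,B] @ Rt \<in> fillings ([p,q] @ t) (c # tb) N \<longleftrightarrow> Rt \<in> lower_fillings t tb N \<and>
     size A = p \<and> size B = q \<and> set_mset A \<subseteq> {1..N} \<and> set_mset B \<subseteq> {1..N} \<and> col_strict c A B \<and>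
     (Rt = [] \<or> col_strict (hd tb) B (hd Rt))"
  proof (cases "t = []")
    case True then show ?thesis using L by (auto simp: fillings_Cons fillings_single lower_fillings_def)
  next
    case False
    then obtain e tb' where "tb = e # tb'" using L by (cases tb) auto
    then show ?thesis using False L by (auto simp: fillings_Cons lower_fillings_def)
  qed
  show ?thesis
  proof (cases "s = []")
    case True then show ?thesis using L lower by (auto simp: upper_fillings_def middle_pairs_def)
  next
    case False
    then have sb: "sb = butlast sb @ [last sb]" using L by (metis append_butlast_last_id length_0_conv)
    have "Rs @ [A,B] @ Rt \<in> fillings (s @ [p,q] @ t) (sb @ [c] @ tb) N \<longleftrightarrow>
      Rs \<in> fillings s (butlast sb) N \<and> [A,B] @ Rt \<in> fillings ([p,q] @ t) (c # tb) N
      \<and> col_strict (last sb) (last Rs) A"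
      using fillings_append[of Rs s "[p,q] @ t" "butlast sb" "[A,B] @ Rt" "last sb" "c # tb" N] False L
      by (subst sb) simp
    then show ?thesis using False L lower by (auto simp: upper_fillings_def middle_pairs_def)
  qed
qed

lemma list_split_middle:
  assumes "length X = k + 2 + l"
  shows "X = take k X @ [X ! k, X ! Suc k] @ drop (k + 2) X"
proof -
  have "drop k X = X ! k # X ! Suc k # drop (k + 2) X"
    using assms by (simp add: Cons_nth_drop_Suc)
  then show ?thesis by (metis append_take_drop_id append_Cons append_Nil)
qed

lemma fillings_middle_bij:
  assumes L: "length sb = length s" "length tb = length t"
  shows "bij_betw (\<lambda>(Rs, Rt, AB). Rs @ [fst AB, snd AB] @ Rt)
    (SIGMA Rs:upper_fillings s sb N. SIGMA Rt:lower_fillings t tb N. middle_pairs p q c (last sb) (hd tb) N Rs Rt)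
    (fillings (s @ [p,q] @ t) (sb @ [c] @ tb) N)"
proof (rule bij_betw_imageI)
  show "inj_on (\<lambda>(Rs, Rt, AB). Rs @ [fst AB, snd AB] @ Rt)
    (SIGMA Rs:upper_fillings s sb N. SIGMA Rt:lower_fillings t tb N. middle_pairs p q c (last sb) (hd tb) N Rs Rt)"
    by (rule inj_onI) (auto simp: append_eq_append_conv dest!: upper_fillings_length)
  show "(\<lambda>(Rs, Rt, AB). Rs @ [fst AB, snd AB] @ Rt) `
    (SIGMA Rs:upper_fillings s sb N. SIGMA Rt:lower_fillings t tb N. middle_pairs p q c (last sb) (hd tb) N Rs Rt)
    = fillings (s @ [p,q] @ t) (sb @ [c] @ tb) N" (is "?f ` ?Z = ?F")
  proof
    show "?f ` ?Z \<subseteq> ?F"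
      using fillings_middle_iff[OF L upper_fillings_length lower_fillings_length] by auto
  next
    show "?F \<subseteq> ?f ` ?Z"
    proof
      fix X assume X: "X \<in> ?F"
      then have "length X = length s + 2 + length t" by (simp add: fillings_def)
      note XX = list_split_middle[OF this]
      have "take (length s) X @ [X ! length s, X ! Suc (length s)] @ drop (length s + 2) X \<in> ?F"
        using X XX by simp
      then have "(take (length s) X, drop (length s + 2) X, (X ! length s, X ! Suc (length s))) \<in> ?Z"
        using fillings_middle_iff[OF L] \<open>length X = _\<close> by simp
      then show "X \<in> ?f ` ?Z" using XX by (auto intro!: image_eqI)
    qed
  qed
qed

lemma rweight_middle: "rweight x (Rs @ A # B # Rt) = rweight x Rs * rweight x Rt * mweight x (A + B)"
  by (simp add: rweight_def mweight_plus mult_ac)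

lemma fillings_middle_sum:
  fixes x :: "nat \<Rightarrow> 'r::comm_ring_1"
  assumes L: "length sb = length s" "length tb = length t"
  shows "(\<Sum>Rs\<in>fillings (s @ [p,q] @ t) (sb @ [c] @ tb) N. rweight x Rs) =
    (\<Sum>Rs\<in>upper_fillings s sb N. \<Sum>Rt\<in>lower_fillings t tb N.
       rweight x Rs * rweight x Rt * middle_weight x p q c (last sb) (hd tb) N Rs Rt)"
proof -
  let ?M = "\<lambda>Rs Rt. middle_pairs p q c (last sb) (hd tb) N Rs Rt"
  let ?Z = "SIGMA Rs:upper_fillings s sb N. SIGMA Rt:lower_fillings t tb N. ?M Rs Rt"
  have "(\<Sum>Rs\<in>fillings (s @ [p,q] @ t) (sb @ [c] @ tb) N. rweight x Rs)
      = (\<Sum>z\<in>?Z. rweight x ((\<lambda>(Rs, Rt, AB). Rs @ [fst AB, snd AB] @ Rt) z))"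
    by (rule sum.reindex_bij_betw[OF fillings_middle_bij[OF L], symmetric])
  also have "\<dots> = (\<Sum>(Rs, w)\<in>?Z. (\<lambda>(Rt, AB). rweight x Rs * rweight x Rt * mweight x (fst AB + snd AB)) w)"
    by (rule sum.cong) (auto simp: rweight_middle)
  also have "\<dots> = (\<Sum>Rs\<in>upper_fillings s sb N. \<Sum>w\<in>Sigma (lower_fillings t tb N) (?M Rs).
      (\<lambda>(Rt, AB). rweight x Rs * rweight x Rt * mweight x (fst AB + snd AB)) w)"
    by (rule sum.Sigma[symmetric]) (auto simp: finite_upper_fillings finite_lower_fillings finite_middle_pairs)
  also have "\<dots> = (\<Sum>Rs\<in>upper_fillings s sb N. \<Sum>Rt\<in>lower_fillings t tb N. \<Sum>AB\<in>?M Rs Rt.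
      rweight x Rs * rweight x Rt * mweight x (fst AB + snd AB))"
    by (rule sum.cong[OF refl], rule sum.Sigma[symmetric]) (auto simp: finite_lower_fillings finite_middle_pairs)
  finally show ?thesis by (simp add: middle_weight_def sum_distrib_left)
qed

(* The row just above the middle: the last upper row, or the virtual row {#0#}, which imposes
   no condition, when there are no upper rows. *)
definition row_above :: "nat multiset list \<Rightarrow> nat multiset" where
  "row_above Rs = (if Rs = [] then {#0#} else last Rs)"

lemma col_strict_row_above: "(Rs = [] \<or> col_strict 1 (last Rs) A) \<longleftrightarrow> col_strict 1 (row_above Rs) A"
  by (simp add: row_above_def col_strict_zero_row col_strict_zero_row')

lemma middle_pairs_upper_1:
  "Rs \<in> upper_fillings s sb N \<Longrightarrow> s \<noteq> [] \<longrightarrow> last sb = 1 \<Longrightarrow>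
    middle_pairs p q c (last sb) e2 N Rs Rt = middle_pairs p q c 1 e2 N Rs Rt"
  by (cases "s = []") (auto simp: upper_fillings_def middle_pairs_def)

lemma middle_pairs_lower_1:
  "Rt \<in> lower_fillings t tb N \<Longrightarrow> t \<noteq> [] \<longrightarrow> hd tb = 1 \<Longrightarrow>
    middle_pairs p q c e1 (hd tb) N Rs Rt = middle_pairs p q c e1 1 N Rs Rt"
  by (cases "t = []") (auto simp: lower_fillings_def middle_pairs_def)

lemma middle_pairs_row_above:
  "middle_pairs p q c 1 e2 N Rs Rt = {(A, B). size A = p \<and> size B = q \<and> set_mset A \<subseteq> {1..N}
     \<and> set_mset B \<subseteq> {1..N} \<and> col_strict c A B \<and> col_strict 1 (row_above Rs) A
     \<and> (Rt = [] \<or> col_strict e2 B (hd Rt))}"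
  unfolding middle_pairs_def col_strict_row_above[symmetric] by simp

(* 5. The two middle rows.  Throughout, (a, b) is a pair of rows of sizes m <= n and (A, B) a pair of
   sizes n + 1 and m - 1; u is the row above (overlap 1) and T the first row below.

   excess a b z is the maximum over 1 <= w <= z of (#b <= w) - (#a <= w - 1), the amount by which
   the small entries of b outnumber those of a one step below; for a tight pair it reaches
   K = n + 1 - m.  Moving the block of entries with these cumulative counts from b to a is the
   map move_up.  Its inverse move_down moves back the block whose counts are the slack of
   (A, B): the minimum over x <= w < N of (#A <= w) - (#B <= w + 1), capped by K. *)
fun excess :: "nat multiset \<Rightarrow> nat multiset \<Rightarrow> nat \<Rightarrow> nat" where
  "excess a b 0 = 0"
| "excess a b (Suc z) = max (excess a b z) (cumcount b (Suc z) - cumcount a z)"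

function slack :: "nat \<Rightarrow> nat \<Rightarrow> nat multiset \<Rightarrow> nat multiset \<Rightarrow> nat \<Rightarrow> nat" where
  "slack K N A B x = (if N \<le> x then K else min (cumcount A x - cumcount B (Suc x)) (slack K N A B (Suc x)))"
  by auto
termination by (relation "measure (\<lambda>(K,N,A,B,x). N - x)") auto

declare slack.simps[simp del]

lemma excess_mono: "mono (excess a b)"
  unfolding mono_iff_le_Suc by simp

lemma excess_ge: "cumcount b (Suc z) - cumcount a z \<le> excess a b (Suc z)"
  by simp

(* The two maps; the block moved has K elements in both directions. *)
definition move_up :: "nat \<Rightarrow> nat multiset \<times> nat multiset \<Rightarrow> nat multiset \<times> nat multiset" where
  "move_up N p = (let D = mset_of_cumcount (excess (fst p) (snd p)) N in (fst p + D, snd p - D))"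

definition move_down :: "nat \<Rightarrow> nat \<Rightarrow> nat multiset \<times> nat multiset \<Rightarrow> nat multiset \<times> nat multiset" where
  "move_down K N p = (let E = mset_of_cumcount (slack K N (fst p) (snd p)) N in (fst p - E, snd p + E))"

(* Tight pairs have overlap m - 1 but not m: they are the middle pairs of the first term not
   counted in the third term.  Raised pairs are the middle pairs of the second term. *)
definition tight_pairs :: "nat \<Rightarrow> nat \<Rightarrow> nat \<Rightarrow> nat multiset \<Rightarrow> (nat multiset \<times> nat multiset) set" where
  "tight_pairs m n N u = {(a,b). size a = m \<and> size b = n \<and> set_mset a \<subseteq> {1..N} \<and> set_mset b \<subseteq> {1..N}
      \<and> col_strict 1 u a \<and> col_strict (m-1) a b \<and> \<not> col_strict m a b}"

definition raised_pairs :: "nat \<Rightarrow> nat \<Rightarrow> nat \<Rightarrow> nat multiset \<Rightarrow> (nat multiset \<times> nat multiset) set" where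
  "raised_pairs m n N u = {(A,B). size A = n + 1 \<and> size B = m - 1 \<and> set_mset A \<subseteq> {1..N} \<and> set_mset B \<subseteq> {1..N}
      \<and> col_strict 1 u A \<and> col_strict (m-1) A B}"

locale two_rows =
  fixes m n N :: nat
  assumes mpos: "0 < m" and mn: "m \<le> n"
begin

abbreviation "K \<equiv> Suc n - m"

lemma K_pos: "1 \<le> K" using mn by simp

abbreviation moved_up :: "nat multiset \<Rightarrow> nat multiset \<Rightarrow> nat multiset" where
  "moved_up a b \<equiv> mset_of_cumcount (excess a b) N"

abbreviation moved_down :: "nat multiset \<Rightarrow> nat multiset \<Rightarrow> nat multiset" where
  "moved_down A B \<equiv> mset_of_cumcount (slack K N A B) N"

context
  fixes a b u
  assumes ab: "(a,b) \<in> tight_pairs m n N u"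
begin

lemma tight_props: "size a = m" "size b = n" "set_mset a \<subseteq> {1..N}" "set_mset b \<subseteq> {1..N}"
  "col_strict 1 u a"
  using ab by (auto simp: tight_pairs_def)

(* Overlap m - 1 bounds the excess by K, and failure of overlap m makes it reach K. *)
lemma diff_le_K: "cumcount b (Suc x) - cumcount a x \<le> K"
proof -
  have "cumcount b (Suc x) + (m - 1) \<le> cumcount a x + n" using ab by (auto simp: tight_pairs_def col_strict_def)
  then show ?thesis using mpos by linarith
qed

lemma excess_le_K: "excess a b x \<le> K"
proof (induction x)
  case (Suc x) then show ?case using diff_le_K[of x] by simp
qed simp

lemma excess_N: "excess a b N = K"
proof -
  from ab obtain x where x: "\<not> cumcount b (Suc x) + m \<le> cumcount a x + n"
    by (auto simp: tight_pairs_def col_strict_def)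
  have "x < N"
  proof (rule ccontr)
    assume "\<not> x < N"
    then have "cumcount b (Suc x) = n" "cumcount a x = m" using tight_props cumcount_ge_N by auto
    then show False using x by simp
  qed
  then have "Suc x \<le> N" by simp
  from monoD[OF excess_mono this] have "excess a b (Suc x) \<le> excess a b N" .
  moreover have "K \<le> cumcount b (Suc x) - cumcount a x" using x by linarith
  ultimately show ?thesis using excess_ge[of b x a] excess_le_K[of N] by linarith
qed

lemma excess_const: "N \<le> x \<Longrightarrow> excess a b x = K"
proof (induction x rule: dec_induct)
  case base then show ?case by (rule excess_N)
next
  case (step x)
  have "cumcount b (Suc x) = n" "cumcount a x = m" using tight_props cumcount_ge_N step by auto
  then show ?case using step by simp
qed

lemma excess_min: "excess a b (min x N) = excess a b x"
  by (cases "x \<le> N") (auto simp: min_def excess_const)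

lemma excess_ge_diff: "cumcount b z - cumcount a z \<le> excess a b z"
proof (cases z)
  case 0 then show ?thesis using cumcount_0_bounded tight_props by simp
next
  case (Suc w)
  have "cumcount a w \<le> cumcount a (Suc w)" by (rule cumcount_mono) simp
  moreover have "cumcount b (Suc w) - cumcount a w \<le> excess a b (Suc w)" by (rule excess_ge)
  ultimately have "cumcount b (Suc w) - cumcount a (Suc w) \<le> excess a b (Suc w)" by linarith
  then show ?thesis using Suc by simp
qed

lemma cumcount_moved_up: "cumcount (moved_up a b) x = excess a b x"
  by (simp add: cumcount_mset_of_cumcount excess_mono excess_min)

lemma moved_up_sub: "moved_up a b \<subseteq># b"
proof (rule mset_subset_eqI)
  fix y
  show "count (moved_up a b) y \<le> count b y"
  proof (cases y)
    case 0 then show ?thesis using cumcount_moved_up[of 0] by (simp add: cumcount_0)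
  next
    case (Suc z)
    have count_moved: "count (moved_up a b) (Suc z) = excess a b (Suc z) - excess a b z" using cumcount_moved_up[of z] cumcount_moved_up[of "Suc z"] cumcount_Suc[of "moved_up a b" z] by simp
    have count_b: "count b (Suc z) = cumcount b (Suc z) - cumcount b z" using cumcount_Suc[of b z] by simp
    have "cumcount b z \<le> cumcount a z + excess a b z" using excess_ge_diff[of z] by linarith
    moreover have "cumcount b z \<le> cumcount b (Suc z)" by (rule cumcount_mono) simp
    ultimately show ?thesis using Suc count_moved count_b by (simp add: max_def) linarith
  qed
qed

lemma move_up_eq: "move_up N (a,b) = (a + moved_up a b, b - moved_up a b)"
  by (simp add: move_up_def Let_def)

lemma cumcount_move_up_top: "cumcount (a + moved_up a b) x = cumcount a x + excess a b x"
  by (simp add: cumcount_moved_up)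

lemma cumcount_move_up_bottom: "cumcount (b - moved_up a b) x = cumcount b x - excess a b x"
  by (simp add: cumcount_diff[OF moved_up_sub] cumcount_moved_up)

lemma size_moved_up: "size (moved_up a b) = K"
  using cumcount_moved_up[of N] cumcount_ge_N[of "moved_up a b" N N, OF set_mset_of_cumcount] excess_N by simp

lemma move_up_raised: "move_up N (a,b) \<in> raised_pairs m n N u"
proof -
  have size_top: "size (a + moved_up a b) = n + 1" using size_moved_up tight_props mn by simp
  have size_bottom: "size (b - moved_up a b) = m - 1" using size_moved_up tight_props mn moved_up_sub by (simp add: size_Diff_submset)
  have set_top: "set_mset (a + moved_up a b) \<subseteq> {1..N}" using tight_props set_mset_of_cumcount by auto
  have set_bottom: "set_mset (b - moved_up a b) \<subseteq> {1..N}" using tight_props(4) by (meson in_diffD subset_iff)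
  have above: "col_strict 1 u (a + moved_up a b)" unfolding col_strict_def
  proof
    fix x
    have "cumcount a (Suc x) + 1 \<le> cumcount u x + size a" using tight_props(5) by (simp add: col_strict_def)
    then show "cumcount (a + moved_up a b) (Suc x) + 1 \<le> cumcount u x + size (a + moved_up a b)"
      using cumcount_move_up_top[of "Suc x"] excess_le_K[of "Suc x"] size_top tight_props(1) mn by linarith
  qed
  have overlap: "col_strict (m-1) (a + moved_up a b) (b - moved_up a b)"
    unfolding col_strict_def size_bottom
  proof
    fix x
    show "cumcount (b - moved_up a b) (Suc x) + (m - 1) \<le> cumcount (a + moved_up a b) x + (m - 1)"
      using cumcount_move_up_top[of x] cumcount_move_up_bottom[of "Suc x"] excess_ge[of b x a] by linarith
  qed
  show ?thesis using size_top size_bottom set_top set_bottom above overlap by (simp add: move_up_eq raised_pairs_def)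
qed

end

context
  fixes A B u
  assumes AB: "(A,B) \<in> raised_pairs m n N u"
begin

lemma raised_props: "size A = n + 1" "size B = m - 1" "set_mset A \<subseteq> {1..N}" "set_mset B \<subseteq> {1..N}"
  "col_strict 1 u A"
  using AB by (auto simp: raised_pairs_def)

(* Overlap m - 1 for sizes (n + 1, m - 1) is a ballot condition. *)
lemma ballot: "cumcount B (Suc x) \<le> cumcount A x"
  using AB by (auto simp: raised_pairs_def col_strict_def)

lemma slack_ge_N: "N \<le> x \<Longrightarrow> slack K N A B x = K"
  by (simp add: slack.simps)

lemma slack_rec: "slack K N A B x = min (cumcount A x - cumcount B (Suc x)) (slack K N A B (Suc x))"
proof (cases "N \<le> x")
  case True
  then have "cumcount A x = n + 1" "cumcount B (Suc x) = m - 1" using raised_props cumcount_ge_N by auto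
  then show ?thesis using True slack_ge_N[of x] slack_ge_N[of "Suc x"] mn by simp
next
  case False then show ?thesis by (simp add: slack.simps[of _ _ _ _ x])
qed

lemma slack_mono: "mono (slack K N A B)"
  unfolding mono_iff_le_Suc by (metis slack_rec min.cobounded2)

lemma slack_le_diff: "slack K N A B x \<le> cumcount A x - cumcount B (Suc x)"
  by (metis slack_rec min.cobounded1)

lemma slack_le_K: "slack K N A B x \<le> K"
proof -
  have "slack K N A B x \<le> slack K N A B (max x N)" using slack_mono by (simp add: mono_def)
  then show ?thesis using slack_ge_N[of "max x N"] by simp
qed

lemma slack_0: "slack K N A B 0 = 0"
  using slack_le_diff[of 0] cumcount_0_bounded[OF raised_props(3)] by simp

lemma slack_min: "slack K N A B (min x N) = slack K N A B x"
  by (cases "x \<le> N") (auto simp: min_def slack_ge_N)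

lemma slack_full: "cumcount A y = n + 1 \<Longrightarrow> y \<le> x \<Longrightarrow> slack K N A B x = K"
proof (induction "N - x" arbitrary: x)
  case 0 then show ?case by (simp add: slack_ge_N)
next
  case (Suc d)
  have "cumcount A y \<le> cumcount A x" using Suc.prems(2) by (rule cumcount_mono)
  then have "cumcount A x = n + 1" using Suc.prems raised_props cumcount_le_size[of A x] by simp
  moreover have "cumcount B (Suc x) \<le> m - 1" using raised_props cumcount_le_size[of B] by metis
  moreover have "slack K N A B (Suc x) = K" using Suc by simp
  ultimately show ?case using slack_rec[of x] mn by simp
qed

(* After moving the block down, at most m - 1 entries of A below a non-full position remain;
   this keeps the overlap with the row above. *)
lemma top_after_move_down_bound: "cumcount A x \<le> n \<Longrightarrow> cumcount A x - slack K N A B x \<le> m - 1"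
proof (induction "N - x" arbitrary: x)
  case 0 then have "cumcount A x = n + 1" using raised_props cumcount_ge_N by simp
  then show ?case using 0 by simp
next
  case (Suc d)
  have B_bound: "cumcount B (Suc x) \<le> m - 1" using raised_props cumcount_le_size[of B] by metis
  show ?case
  proof (cases "slack K N A B x = slack K N A B (Suc x)")
    case False
    then have "slack K N A B x = cumcount A x - cumcount B (Suc x)" using slack_rec[of x] by (simp add: min_def split: if_splits)
    then show ?thesis using B_bound ballot[of x] by linarith
  next
    case True
    have mono_A: "cumcount A x \<le> cumcount A (Suc x)" by (rule cumcount_mono) simp
    show ?thesis
    proof (cases "cumcount A (Suc x) \<le> n")
      case True
      then have "cumcount A (Suc x) - slack K N A B (Suc x) \<le> m - 1" using Suc by simp
      then show ?thesis using \<open>slack K N A B x = slack K N A B (Suc x)\<close> mono_A by linarith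
    next
      case False
      then have "cumcount A (Suc x) = n + 1" using raised_props cumcount_le_size[of A "Suc x"] by simp
      then have "slack K N A B (Suc x) = K" using slack_full by simp
      then show ?thesis using \<open>slack K N A B x = slack K N A B (Suc x)\<close> Suc.prems mn by simp
    qed
  qed
qed

lemma cumcount_moved_down: "cumcount (moved_down A B) x = slack K N A B x"
  by (simp add: cumcount_mset_of_cumcount slack_mono slack_0 slack_min)

lemma moved_down_sub: "moved_down A B \<subseteq># A"
proof (rule mset_subset_eqI)
  fix y
  show "count (moved_down A B) y \<le> count A y"
  proof (cases y)
    case 0 then show ?thesis using cumcount_moved_down[of 0] slack_0 by (simp add: cumcount_0)
  next
    case (Suc z)
    have "cumcount (moved_down A B) (Suc z) = cumcount (moved_down A B) z + count (moved_down A B) (Suc z)" by (rule cumcount_Suc)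
    then have count_moved: "count (moved_down A B) (Suc z) = slack K N A B (Suc z) - slack K N A B z" using cumcount_moved_down[of z] cumcount_moved_down[of "Suc z"] by linarith
    have count_A: "count A (Suc z) = cumcount A (Suc z) - cumcount A z" using cumcount_Suc[of A z] by simp
    have rec: "slack K N A B z = min (cumcount A z - cumcount B (Suc z)) (slack K N A B (Suc z))" by (rule slack_rec)
    have next_le: "slack K N A B (Suc z) \<le> cumcount A (Suc z) - cumcount B (Suc (Suc z))" by (rule slack_le_diff)
    have mono_B: "cumcount B (Suc z) \<le> cumcount B (Suc (Suc z))" by (rule cumcount_mono) simp
    have mono_A: "cumcount A z \<le> cumcount A (Suc z)" by (rule cumcount_mono) simp
    have ballot_z: "cumcount B (Suc z) \<le> cumcount A z" by (rule ballot)
    have ballot_Suc_z: "cumcount B (Suc (Suc z)) \<le> cumcount A (Suc z)" by (rule ballot)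
    show ?thesis using Suc count_moved count_A rec next_le mono_B mono_A ballot_z ballot_Suc_z by (simp add: min_def split: if_splits) linarith?
  qed
qed

lemma move_down_eq: "move_down K N (A,B) = (A - moved_down A B, B + moved_down A B)"
  by (simp add: move_down_def Let_def)

lemma cumcount_move_down_top: "cumcount (A - moved_down A B) x = cumcount A x - slack K N A B x"
  by (simp add: cumcount_diff[OF moved_down_sub] cumcount_moved_down)

lemma cumcount_move_down_bottom: "cumcount (B + moved_down A B) x = cumcount B x + slack K N A B x"
  by (simp add: cumcount_moved_down)

lemma slack_le_cumcount: "slack K N A B x \<le> cumcount A x"
  using slack_le_diff[of x] by linarith

(* The excess of the lowered pair is the slack of the raised pair, so move_up undoes move_down. *)
lemma excess_move_down: "excess (A - moved_down A B) (B + moved_down A B) x = slack K N A B x"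
proof (induction x)
  case 0 then show ?case using slack_0 by simp
next
  case (Suc x)
  have rec: "slack K N A B x = min (cumcount A x - cumcount B (Suc x)) (slack K N A B (Suc x))" by (rule slack_rec)
  have ballot_x: "cumcount B (Suc x) \<le> cumcount A x" by (rule ballot)
  have "excess (A - moved_down A B) (B + moved_down A B) (Suc x) = max (slack K N A B x) ((cumcount B (Suc x) + slack K N A B (Suc x)) - (cumcount A x - slack K N A B x))"
    using Suc by (simp add: cumcount_move_down_top cumcount_move_down_bottom cumcount_moved_down)
  also have "\<dots> = slack K N A B (Suc x)"
    using rec ballot_x slack_le_cumcount[of x] by (simp add: min_def max_def split: if_splits) linarith?
  finally show ?case .
qed

lemma size_moved_down: "size (moved_down A B) = K"
  using cumcount_moved_down[of N] cumcount_ge_N[of "moved_down A B" N N, OF set_mset_of_cumcount] slack_ge_N[of N] by simp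

lemma move_down_below_u: "col_strict 1 u (A - moved_down A B)"
  unfolding col_strict_def
proof
  fix x
  have s1: "size (A - moved_down A B) = m"
    using size_moved_down raised_props mn moved_down_sub by (simp add: size_Diff_submset)
  have h: "cumcount A (Suc x) + 1 \<le> cumcount u x + (n + 1)"
    using raised_props(5) raised_props(1) by (simp add: col_strict_def)
  show "cumcount (A - moved_down A B) (Suc x) + 1 \<le> cumcount u x + size (A - moved_down A B)"
  proof (cases "cumcount u x = 0")
    case True
    then have "cumcount A (Suc x) \<le> n" using h by simp
    then show ?thesis
      using top_after_move_down_bound[of "Suc x"] cumcount_move_down_top[of "Suc x"] s1 True mpos by simp
  next
    case False
    then show ?thesis using cumcount_le_size[of "A - moved_down A B" "Suc x"] s1 by simp
  qed
qed

(* The lowered pair is tight: overlap m would bound its excess, which is the slack, by K - 1. *)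
lemma move_down_not_col_strict: "\<not> col_strict m (A - moved_down A B) (B + moved_down A B)"
proof
  assume h: "col_strict m (A - moved_down A B) (B + moved_down A B)"
  have s2: "size (B + moved_down A B) = n" using size_moved_down raised_props mn mpos by simp
  have "excess (A - moved_down A B) (B + moved_down A B) x \<le> K - 1" for x
  proof (induction x)
    case (Suc x)
    have "cumcount (B + moved_down A B) (Suc x) + m \<le> cumcount (A - moved_down A B) x + n"
      using h s2 by (simp add: col_strict_def)
    then show ?case using Suc mn by simp
  qed simp
  then have "slack K N A B N \<le> K - 1" using excess_move_down by metis
  then show False using slack_ge_N[of N] K_pos by simp
qed

lemma move_down_tight: "move_down K N (A,B) \<in> tight_pairs m n N u"
proof -
  have size_top: "size (A - moved_down A B) = m" using size_moved_down raised_props mn moved_down_sub by (simp add: size_Diff_submset)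
  have size_bottom: "size (B + moved_down A B) = n" using size_moved_down raised_props mn mpos by simp
  have set_top: "set_mset (A - moved_down A B) \<subseteq> {1..N}" using raised_props(3) by (meson in_diffD subset_iff)
  have set_bottom: "set_mset (B + moved_down A B) \<subseteq> {1..N}" using raised_props set_mset_of_cumcount by auto
  have overlap: "col_strict (m-1) (A - moved_down A B) (B + moved_down A B)"
    unfolding col_strict_def size_bottom
  proof
    fix x
    have "slack K N A B x \<le> cumcount A x - cumcount B (Suc x)" by (rule slack_le_diff)
    moreover have "slack K N A B (Suc x) \<le> K" by (rule slack_le_K)
    moreover have "cumcount B (Suc x) \<le> cumcount A x" by (rule ballot)
    ultimately show "cumcount (B + moved_down A B) (Suc x) + (m - 1) \<le> cumcount (A - moved_down A B) x + n"
      using cumcount_move_down_top[of x] cumcount_move_down_bottom[of "Suc x"] mn mpos by linarith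
  qed
  show ?thesis using size_top size_bottom set_top set_bottom move_down_below_u overlap move_down_not_col_strict
    by (simp add: move_down_eq tight_pairs_def)
qed

lemma move_up_move_down: "move_up N (move_down K N (A,B)) = (A,B)"
proof -
  have "mset_of_cumcount (excess (A - moved_down A B) (B + moved_down A B)) N = moved_down A B" using excess_move_down by presburger
  then show ?thesis using moved_down_sub by (simp add: move_down_eq move_up_def Let_def subset_mset.diff_add)
qed

end

lemma slack_pos:
  assumes H: "(A,B) \<in> raised_pairs m n N u" and h: "\<And>z. x \<le> z \<Longrightarrow> 1 \<le> cumcount A z - cumcount B (Suc z)"
  shows "1 \<le> slack K N A B x"
  using h
proof (induction "N - x" arbitrary: x)
  case 0 then show ?case using slack_ge_N[OF H, of x] K_pos by simp
next
  case (Suc d)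
  have "1 \<le> slack K N A B (Suc x)" using Suc by simp
  then show ?case using slack_rec[OF H, of x] Suc.prems[of x] by simp
qed

(* Glued pairs for a row T: raised pairs (A, C) such that C lies above T and A is above T + C
   with overlap m.  They are the raised pairs lost by move_up among those compatible with T. *)
definition glued_pairs :: "nat multiset \<Rightarrow> nat multiset \<Rightarrow> (nat multiset \<times> nat multiset) set" where
  "glued_pairs T u = {(A,C). size A = n + 1 \<and> size C = m - 1 \<and> set_mset A \<subseteq> {1..N} \<and> set_mset C \<subseteq> {1..N}
      \<and> col_strict 1 u A \<and> (lies_above C T) \<and> col_strict m A (T + C)}"

lemma glued_sub_raised: "glued_pairs T u \<subseteq> raised_pairs m n N u"
proof
  fix p assume "p \<in> glued_pairs T u"
  then obtain A C where p: "p = (A,C)" and g: "size A = n + 1" "size C = m - 1" "set_mset A \<subseteq> {1..N}"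
    "set_mset C \<subseteq> {1..N}" "col_strict 1 u A" "lies_above C T" "col_strict m A (T + C)"
    by (auto simp: glued_pairs_def)
  have "col_strict (m-1) A C"
    unfolding col_strict_def
  proof
    fix x
    have h: "cumcount T (Suc x) + cumcount C (Suc x) + m \<le> cumcount A x + (size T + (m - 1))"
      using g(7) g(2) by (simp add: col_strict_def)
    show "cumcount C (Suc x) + (m - 1) \<le> cumcount A x + size C"
    proof (cases "1 \<le> cumcount C (Suc x)")
      case True
      then have "cumcount T (Suc x) = size T" using lies_above_cumcount_full g(6) by blast
      then show ?thesis using h g(2) mpos by linarith
    next
      case False then show ?thesis using g(2) by simp
    qed
  qed
  then show "p \<in> raised_pairs m n N u" using g p by (simp add: raised_pairs_def)
qed

lemma glued_not_below:
  assumes T: "T \<noteq> {#}" "set_mset T \<subseteq> {1..N}"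
    and h: "col_strict 1 B T" "(A,B) \<in> glued_pairs T u"
  shows False
proof -
  have g: "lies_above B T" using h(2) by (simp add: glued_pairs_def)
  have step: "cumcount T (Suc x) = size T \<Longrightarrow> cumcount T x = size T" for x
    using h(1) lies_above_cumcount_full[OF g] unfolding col_strict_1_iff by auto
  have "cumcount T (N - d) = size T" for d
  proof (induction d)
    case 0 then show ?case using cumcount_ge_N[OF T(2)] by simp
  next
    case (Suc d)
    show ?case
    proof (cases "N - d = 0")
      case True then show ?thesis using Suc by simp
    next
      case False then have "N - d = Suc (N - Suc d)" by simp
      then show ?thesis using Suc step by metis
    qed
  qed
  then have "cumcount T 0 = size T" by (metis diff_self_eq_0)
  then show False using cumcount_0_bounded[OF T(2)] T(1) by simp
qed

context
  fixes a b u
  assumes ab: "(a,b) \<in> tight_pairs m n N u"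
begin

lemma excess_le_cumcount: "excess a b x \<le> cumcount b x"
proof -
  have "cumcount (moved_up a b) x \<le> cumcount b x"
    using moved_up_sub[OF ab] by (metis cumcount_diff cumcount_plus le_add1 subset_mset.add_diff_inverse)
  then show ?thesis using cumcount_moved_up[OF ab] by simp
qed

(* The slack of the raised pair is the excess of the tight pair, so move_down undoes move_up. *)
lemma slack_after_move_up: "slack K N (a + moved_up a b) (b - moved_up a b) x = excess a b x"
proof -
  have H: "(a + moved_up a b, b - moved_up a b) \<in> raised_pairs m n N u" using move_up_raised[OF ab] move_up_eq[OF ab] by simp
  note cA = cumcount_move_up_top[OF ab] and cB = cumcount_move_up_bottom[OF ab]
  show ?thesis
  proof (induction "N - x" arbitrary: x)
    case 0 then show ?case using slack_ge_N[OF H, of x] excess_const[OF ab, of x] by simp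
  next
    case (Suc d)
    then have IH: "slack K N (a + moved_up a b) (b - moved_up a b) (Suc x) = excess a b (Suc x)" by simp
    have r: "slack K N (a + moved_up a b) (b - moved_up a b) x
        = min (cumcount (a + moved_up a b) x - cumcount (b - moved_up a b) (Suc x)) (slack K N (a + moved_up a b) (b - moved_up a b) (Suc x))"
      by (rule slack_rec[OF H])
    show ?case
    proof (cases "cumcount b (Suc x) - cumcount a x \<le> excess a b x")
      case True
      then have e: "excess a b (Suc x) = excess a b x" by simp
      have "excess a b x \<le> cumcount (a + moved_up a b) x - cumcount (b - moved_up a b) (Suc x)" using cA[of x] cB[of "Suc x"] True e by arith
      then show ?thesis using r IH e by simp
    next
      case False
      then have e: "excess a b (Suc x) = cumcount b (Suc x) - cumcount a x" by simp
      have "cumcount (b - moved_up a b) (Suc x) = cumcount a x" using cB[of "Suc x"] e False by arith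
      then have "cumcount (a + moved_up a b) x - cumcount (b - moved_up a b) (Suc x) = excess a b x" using cA by simp
      then show ?thesis using r IH e False by simp
    qed
  qed
qed

lemma move_down_move_up: "move_down K N (move_up N (a,b)) = (a,b)"
proof -
  have "mset_of_cumcount (slack K N (a + moved_up a b) (b - moved_up a b)) N = moved_up a b"
    using slack_after_move_up by presburger
  then show ?thesis using moved_up_sub[OF ab] by (simp add: move_down_def move_up_def Let_def subset_mset.diff_add)
qed

lemma move_up_col_strict_glue:
  assumes full: "\<And>y. 1 \<le> cumcount (b - moved_up a b) y \<Longrightarrow> cumcount T y = size T"
    and pos: "\<And>x. cumcount T (Suc x) = size T \<Longrightarrow> 1 \<le> excess a b x"
  shows "col_strict m (a + moved_up a b) (T + (b - moved_up a b))"
  unfolding col_strict_def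
proof
  fix x
  have sB: "size (b - moved_up a b) = m - 1"
    using move_up_raised[OF ab] move_up_eq[OF ab] by (simp add: raised_pairs_def)
  show "cumcount (T + (b - moved_up a b)) (Suc x) + m \<le> cumcount (a + moved_up a b) x + size (T + (b - moved_up a b))"
  proof (cases "cumcount T (Suc x) = size T")
    case True
    have "cumcount (b - moved_up a b) (Suc x) + 1 \<le> cumcount (a + moved_up a b) x"
      using excess_ge[of b x a] cumcount_move_up_bottom[OF ab, of "Suc x"] cumcount_move_up_top[OF ab, of x]
        pos[OF True] by linarith
    then show ?thesis using True sB mpos by simp
  next
    case False
    then have "cumcount (b - moved_up a b) (Suc x) = 0" using full by (metis less_one not_le)
    moreover have "cumcount T (Suc x) < size T" using False cumcount_le_size[of T] by (metis le_neq_implies_less)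
    ultimately show ?thesis using sB mpos by simp
  qed
qed

lemma move_up_below_glued:
  assumes strict_b: "col_strict 1 b T" and not_B: "\<not> col_strict 1 (b - moved_up a b) T"
  shows "(a + moved_up a b, b - moved_up a b) \<in> glued_pairs T u"
proof -
  have H: "(a + moved_up a b, b - moved_up a b) \<in> raised_pairs m n N u"
    using move_up_raised[OF ab] move_up_eq[OF ab] by simp
  note cB = cumcount_move_up_bottom[OF ab]
  obtain x0 where x0: "cumcount T (Suc x0) = size T" "cumcount (b - moved_up a b) x0 = 0"
    using not_B unfolding col_strict_1_iff by auto
  have fb: "cumcount T (Suc x) = size T \<Longrightarrow> 1 \<le> cumcount b x" for x
    using strict_b unfolding col_strict_1_iff by auto
  have full: "cumcount T y = size T" if "1 \<le> cumcount (b - moved_up a b) y" for y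
  proof -
    have "Suc x0 \<le> y" using that x0(2) cumcount_mono[of y x0 "b - moved_up a b"] by (cases "y \<le> x0") auto
    then have "cumcount T (Suc x0) \<le> cumcount T y" by (rule cumcount_mono)
    then show ?thesis using x0(1) cumcount_le_size[of T y] by simp
  qed
  have pos: "1 \<le> excess a b x" if "cumcount T (Suc x) = size T" for x
  proof (cases "cumcount (b - moved_up a b) x = 0")
    case True then show ?thesis using fb[OF that] cB[of x] by simp
  next
    case False
    then have "x0 \<le> x" using x0(2) cumcount_mono[of x x0 "b - moved_up a b"] by (cases "x \<le> x0") auto
    moreover have "1 \<le> excess a b x0" using fb[OF x0(1)] cB[of x0] x0(2) by simp
    ultimately show ?thesis using monoD[OF excess_mono] by (meson order_trans)
  qed
  show ?thesis using H move_up_col_strict_glue[OF full pos] lies_above_if_full[of "b - moved_up a b" T] full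
    by (simp add: glued_pairs_def raised_pairs_def)
qed

lemma move_up_glued_below:
  assumes G: "(a + moved_up a b, b - moved_up a b) \<in> glued_pairs T u"
  shows "col_strict 1 b T"
  unfolding col_strict_1_iff
proof (intro allI impI)
  fix x assume fx: "cumcount T (Suc x) = size T"
  have H: "(a + moved_up a b, b - moved_up a b) \<in> raised_pairs m n N u" using move_up_raised[OF ab] move_up_eq[OF ab] by simp
  have g: "col_strict m (a + moved_up a b) (T + (b - moved_up a b))" "size (b - moved_up a b) = m - 1"
    using G by (auto simp: glued_pairs_def)
  have "1 \<le> cumcount (a + moved_up a b) z - cumcount (b - moved_up a b) (Suc z)" if "x \<le> z" for z
  proof -
    have "cumcount T (Suc x) \<le> cumcount T (Suc z)" using that by (simp add: cumcount_mono)
    then have "cumcount T (Suc z) = size T" using fx cumcount_le_size[of T "Suc z"] by simp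
    moreover have "cumcount T (Suc z) + cumcount (b - moved_up a b) (Suc z) + m \<le> cumcount (a + moved_up a b) z + (size T + size (b - moved_up a b))"
      using g(1) by (simp add: col_strict_def)
    ultimately show ?thesis using g(2) mpos by simp
  qed
  then have "1 \<le> slack K N (a + moved_up a b) (b - moved_up a b) x" using slack_pos[OF H] by blast
  then show "1 \<le> cumcount b x" using slack_after_move_up[of x] excess_le_cumcount[of x] by linarith
qed

lemma move_up_below_iff:
  "col_strict 1 b T \<longleftrightarrow> col_strict 1 (snd (move_up N (a,b))) T \<or> move_up N (a,b) \<in> glued_pairs T u"
proof -
  have "col_strict 1 (b - moved_up a b) T \<Longrightarrow> col_strict 1 b T"
    using cumcount_move_up_bottom[OF ab] unfolding col_strict_1_iff by (metis diff_le_self order_trans)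
  then show ?thesis using move_up_below_glued move_up_glued_below by (auto simp: move_up_eq[OF ab])
qed

end

lemma move_up_bij: "bij_betw (move_up N) (tight_pairs m n N u) (raised_pairs m n N u)"
  by (rule bij_betw_byWitness[where f'="move_down K N"]) (auto simp: move_down_move_up move_up_move_down move_up_raised move_down_tight)

lemma move_up_union: "(a,b) \<in> tight_pairs m n N u \<Longrightarrow> fst (move_up N (a,b)) + snd (move_up N (a,b)) = a + b"
  using moved_up_sub by (simp add: move_up_def Let_def)

lemma finite_raised_pairs: "finite (raised_pairs m n N u)"
proof (rule finite_subset)
  show "raised_pairs m n N u \<subseteq> multisets_of_size {1..N} (n+1) \<times> multisets_of_size {1..N} (m-1)"
    by (auto simp: raised_pairs_def multisets_of_size_def)
qed auto

lemma sum_tight_pairs: "(\<Sum>p\<in>tight_pairs m n N u. f (fst p + snd p)) = (\<Sum>p\<in>raised_pairs m n N u. f (fst p + snd p))"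
proof -
  have "(\<Sum>p\<in>tight_pairs m n N u. f (fst p + snd p)) = (\<Sum>p\<in>tight_pairs m n N u. f (fst (move_up N p) + snd (move_up N p)))"
    by (rule sum.cong) (auto simp: move_up_union)
  also have "\<dots> = (\<Sum>p\<in>raised_pairs m n N u. f (fst p + snd p))"
    using sum.reindex_bij_betw[OF move_up_bij, of "\<lambda>p. f (fst p + snd p)"] by simp
  finally show ?thesis .
qed

lemma move_up_image_below:
  "move_up N ` {p\<in>tight_pairs m n N u. col_strict 1 (snd p) T}
    = {p\<in>raised_pairs m n N u. col_strict 1 (snd p) T} \<union> glued_pairs T u"
proof
  show "move_up N ` {p\<in>tight_pairs m n N u. col_strict 1 (snd p) T}
    \<subseteq> {p\<in>raised_pairs m n N u. col_strict 1 (snd p) T} \<union> glued_pairs T u"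
    using move_up_below_iff move_up_raised by fastforce
next
  show "{p\<in>raised_pairs m n N u. col_strict 1 (snd p) T} \<union> glued_pairs T u
    \<subseteq> move_up N ` {p\<in>tight_pairs m n N u. col_strict 1 (snd p) T}"
  proof
    fix q assume q: "q \<in> {p\<in>raised_pairs m n N u. col_strict 1 (snd p) T} \<union> glued_pairs T u"
    then have qH: "q \<in> raised_pairs m n N u" using glued_sub_raised by auto
    obtain A B where qq: "q = (A,B)" by (cases q)
    obtain a b where ab: "move_down K N (A,B) = (a,b)" by (cases "move_down K N (A,B)")
    have pS: "(a,b) \<in> tight_pairs m n N u" using move_down_tight qH qq ab by metis
    have "move_up N (a,b) = (A,B)" using move_up_move_down[of A B] qH qq ab by simp
    moreover have "col_strict 1 b T" using move_up_below_iff[OF pS] q qq calculation by auto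
    ultimately show "q \<in> move_up N ` {p\<in>tight_pairs m n N u. col_strict 1 (snd p) T}"
      using pS qq by force
  qed
qed

lemma sum_tight_pairs_below:
  assumes T: "T \<noteq> {#}" "set_mset T \<subseteq> {1..N}"
  shows "(\<Sum>p\<in>{p\<in>tight_pairs m n N u. col_strict 1 (snd p) T}. f (fst p + snd p))
    = (\<Sum>p\<in>{p\<in>raised_pairs m n N u. col_strict 1 (snd p) T}. f (fst p + snd p)) + (\<Sum>p\<in>glued_pairs T u. f (fst p + snd p))"
proof -
  let ?S0 = "{p\<in>tight_pairs m n N u. col_strict 1 (snd p) T}"
  let ?F = "{p\<in>raised_pairs m n N u. col_strict 1 (snd p) T}"
  have inj: "inj_on (move_up N) ?S0" using move_up_bij by (rule bij_betw_imp_inj_on[THEN inj_on_subset]) auto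
  have disj: "?F \<inter> glued_pairs T u = {}" using glued_not_below[OF T] by auto
  have finF: "finite ?F" using finite_raised_pairs by simp
  have finG: "finite (glued_pairs T u)" using finite_raised_pairs glued_sub_raised by (rule finite_subset[rotated])
  have "(\<Sum>p\<in>?S0. f (fst p + snd p)) = (\<Sum>p\<in>?S0. f (fst (move_up N p) + snd (move_up N p)))"
    by (rule sum.cong) (auto simp: move_up_union)
  also have "\<dots> = (\<Sum>p\<in>move_up N ` ?S0. f (fst p + snd p))"
    using sum.reindex[OF inj, of "\<lambda>p. f (fst p + snd p)"] by simp
  also have "\<dots> = (\<Sum>p\<in>?F. f (fst p + snd p)) + (\<Sum>p\<in>glued_pairs T u. f (fst p + snd p))"
    unfolding move_up_image_below by (rule sum.union_disjoint[OF finF finG disj])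
  finally show ?thesis .
qed

definition glued_weight :: "(nat \<Rightarrow> 'r::comm_ring_1) \<Rightarrow> nat multiset \<Rightarrow> nat multiset \<Rightarrow> 'r" where
  "glued_weight x T u = (\<Sum>AC\<in>glued_pairs T u. mweight x (fst AC + snd AC))"

(* The tight pairs split into the first extra term of the identity, the raised pairs, and the
   glued pairs; the middle condition on a pair of rows of lengths (m, n) with overlap m - 1
   is either overlap m, or tightness. *)
lemma middle_weight_split:
  fixes x :: "nat \<Rightarrow> 'r::comm_ring_1"
  assumes below: "Rt \<noteq> [] \<Longrightarrow> hd Rt \<noteq> {#} \<and> set_mset (hd Rt) \<subseteq> {1..N}"
  shows "middle_weight x m n (m - 1) 1 1 N Rs Rt = middle_weight x m n m 1 1 N Rs Rt
    + middle_weight x (n + 1) (m - 1) (m - 1) 1 1 N Rs Rt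
    + (if Rt = [] then 0 else glued_weight x (hd Rt) (row_above Rs))"
proof -
  let ?u = "row_above Rs"
  define V where "V = (\<lambda>B. Rt = [] \<or> col_strict 1 B (hd Rt))"
  let ?S = "{p \<in> tight_pairs m n N ?u. V (snd p)}"
  let ?H = "{p \<in> raised_pairs m n N ?u. V (snd p)}"
  let ?w = "\<lambda>p. mweight x (fst p + snd p)"
  have split: "middle_pairs m n (m - 1) 1 1 N Rs Rt = middle_pairs m n m 1 1 N Rs Rt \<union> ?S"
    unfolding middle_pairs_row_above by (auto simp: tight_pairs_def V_def intro: col_strict_mono)
  have disj: "middle_pairs m n m 1 1 N Rs Rt \<inter> ?S = {}"
    unfolding middle_pairs_row_above by (auto simp: tight_pairs_def)
  have raised: "middle_pairs (n + 1) (m - 1) (m - 1) 1 1 N Rs Rt = ?H"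
    unfolding middle_pairs_row_above by (auto simp: raised_pairs_def V_def)
  have tight: "(\<Sum>p\<in>?S. ?w p) = (\<Sum>p\<in>?H. ?w p) + (if Rt = [] then 0 else glued_weight x (hd Rt) ?u)"
  proof (cases "Rt = []")
    case True then show ?thesis using sum_tight_pairs[where u = ?u and f = "mweight x"] by (simp add: V_def)
  next
    case False then show ?thesis
      using sum_tight_pairs_below[where T = "hd Rt" and u = ?u and f = "mweight x"] below by (simp add: V_def glued_weight_def)
  qed
  have "finite ?S"
    by (rule finite_subset[OF _ finite_middle_pairs[of m n "m - 1" 1 1 N Rs Rt]]) (unfold split, blast)
  then have "middle_weight x m n (m - 1) 1 1 N Rs Rt = middle_weight x m n m 1 1 N Rs Rt + (\<Sum>p\<in>?S. ?w p)"
    unfolding middle_weight_def split by (rule sum.union_disjoint[OF finite_middle_pairs _ disj])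
  moreover have "middle_weight x (n + 1) (m - 1) (m - 1) 1 1 N Rs Rt = (\<Sum>p\<in>?H. ?w p)"
    unfolding middle_weight_def raised ..
  ultimately show ?thesis using tight by (simp add: algebra_simps)
qed

(* Gluing: a lower filling whose first row T carries a glued pair (A, C) becomes the lower
   filling without T together with the middle pair (A, T + C) of the shape in which the row
   below the middle has absorbed T. *)
definition glue :: "nat multiset list \<times> nat multiset \<times> nat multiset \<Rightarrow> nat multiset list \<times> nat multiset \<times> nat multiset" where
  "glue = (\<lambda>(Rt, A, C). (tl Rt, A, hd Rt + C))"

context
  fixes t tb :: "nat list" and Rs :: "nat multiset list"
  assumes ne: "t \<noteq> []" and L: "length tb = length t"
begin

abbreviation glue_dom where
  "glue_dom \<equiv> SIGMA Rt:lower_fillings t tb N. glued_pairs (hd Rt) (row_above Rs)"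

abbreviation glue_cod where
  "glue_cod \<equiv> SIGMA Rt':lower_fillings (tl t) (tl tb) N. middle_pairs (n + 1) (m - 1 + hd t) m 1 (hd (tl tb)) N Rs Rt'"

lemma lower_fillings_Cons:
  assumes "Rt \<in> lower_fillings t tb N"
  obtains T Rt' where "Rt = T # Rt'" "size T = hd t" "set_mset T \<subseteq> {1..N}" "Rt' \<in> lower_fillings (tl t) (tl tb) N"
    "Rt' = [] \<or> col_strict (hd (tl tb)) T (hd Rt')"
proof -
  have "Rt \<noteq> []" using assms ne lower_fillings_length by fastforce
  then obtain T Rt' where "Rt = T # Rt'" by (cases Rt) auto
  then show thesis using that assms lower_fillings_Cons_iff[OF ne L] by auto
qed

lemma glue_into:
  assumes "y \<in> glue_dom"
  shows "glue y \<in> glue_cod"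
proof -
  obtain Rt A C where y: "y = (Rt, A, C)" by (cases y) auto
  have Rt: "Rt \<in> lower_fillings t tb N" and AC: "(A, C) \<in> glued_pairs (hd Rt) (row_above Rs)"
    using assms y by auto
  obtain T Rt' where T: "Rt = T # Rt'" "size T = hd t" "set_mset T \<subseteq> {1..N}"
    "Rt' \<in> lower_fillings (tl t) (tl tb) N" "Rt' = [] \<or> col_strict (hd (tl tb)) T (hd Rt')"
    using lower_fillings_Cons[OF Rt] by blast
  have "(A, T + C) \<in> middle_pairs (n + 1) (m - 1 + hd t) m 1 (hd (tl tb)) N Rs Rt'"
    using AC T col_strict_add_above[of "hd (tl tb)" T "hd Rt'" C]
    unfolding middle_pairs_row_above by (auto simp: glued_pairs_def)
  then show ?thesis using T y by (simp add: glue_def)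
qed

lemma glue_inj: "inj_on glue glue_dom"
proof (rule inj_onI)
  fix y1 y2 assume y1: "y1 \<in> glue_dom" and y2: "y2 \<in> glue_dom" and eq: "glue y1 = glue y2"
  obtain R1 A1 C1 R2 A2 C2 where y: "y1 = (R1, A1, C1)" "y2 = (R2, A2, C2)" by (cases y1; cases y2) auto
  obtain T1 R1' where r1: "R1 = T1 # R1'" "size T1 = hd t" using lower_fillings_Cons y1 y by blast
  obtain T2 R2' where r2: "R2 = T2 # R2'" "size T2 = hd t" using lower_fillings_Cons y2 y by blast
  have "lies_above C1 T1" "lies_above C2 T2" using y1 y2 y r1 r2 by (auto simp: glued_pairs_def)
  moreover have "R1' = R2'" "A1 = A2" "T1 + C1 = T2 + C2" using eq y r1 r2 by (auto simp: glue_def)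
  ultimately show "y1 = y2" using lies_above_split_unique[of T1 C1 T2 C2] y r1 r2 by simp
qed

(* Conversely the middle row of length m - 1 + hd t splits into its hd t smallest entries,
   which form the new first lower row, and the rest. *)
lemma glue_onto:
  assumes overlap: "tl t \<noteq> [] \<longrightarrow> hd (tl tb) \<le> hd t" and "z \<in> glue_cod"
  shows "z \<in> glue ` glue_dom"
proof -
  obtain Rt' A B where zz: "z = (Rt', A, B)" by (cases z) auto
  then have Rt': "Rt' \<in> lower_fillings (tl t) (tl tb) N"
    and z: "(A, B) \<in> middle_pairs (n + 1) (m - 1 + hd t) m 1 (hd (tl tb)) N Rs Rt'"
    using assms(2) by auto
  have ab: "size A = n + 1" "size B = m - 1 + hd t" "set_mset A \<subseteq> {1..N}" "set_mset B \<subseteq> {1..N}"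
    "col_strict m A B" "col_strict 1 (row_above Rs) A" "Rt' = [] \<or> col_strict (hd (tl tb)) B (hd Rt')"
    using z unfolding middle_pairs_row_above by auto
  define T where "T = mset (take (hd t) (sorted_list_of_multiset B))"
  define C where "C = mset (drop (hd t) (sorted_list_of_multiset B))"
  have "hd t \<le> size B" using ab(2) by simp
  note sp = sorted_split[OF this, folded T_def C_def]
  have sC: "size C = m - 1" using sp(3) ab(2) by simp
  have "Rt' = [] \<or> col_strict (hd (tl tb)) T (hd Rt')"
  proof (cases "Rt' = []")
    case False
    then have "tl t \<noteq> []" using Rt' lower_fillings_length by fastforce
    then show ?thesis using ab(7) False overlap sp col_strict_remove_above[of "hd (tl tb)" T C "hd Rt'"] by simp
  qed simp
  then have "T # Rt' \<in> lower_fillings t tb N" using lower_fillings_Cons_iff[OF ne L] sp ab(4) Rt' by auto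
  moreover have "(A, C) \<in> glued_pairs T (row_above Rs)" using ab sp sC by (auto simp: glued_pairs_def)
  ultimately have "glue (T # Rt', A, C) \<in> glue ` glue_dom" by (intro imageI) simp
  moreover have "glue (T # Rt', A, C) = z" using sp zz by (simp add: glue_def)
  ultimately show ?thesis by simp
qed

lemma glue_weight: "(Rt, A, C) \<in> glue_dom \<Longrightarrow>
    rweight x (tl Rt) * mweight x (A + (hd Rt + C)) = rweight x Rt * mweight x (A + C)"
  by (erule SigmaE, erule lower_fillings_Cons) (auto simp: rweight_def mweight_plus mult_ac)

lemma sum_glued_pairs:
  fixes x :: "nat \<Rightarrow> 'r::comm_ring_1"
  assumes overlap: "tl t \<noteq> [] \<longrightarrow> hd (tl tb) \<le> hd t"
  shows "(\<Sum>Rt'\<in>lower_fillings (tl t) (tl tb) N.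
      rweight x Rt' * middle_weight x (n + 1) (m - 1 + hd t) m 1 (hd (tl tb)) N Rs Rt')
    = (\<Sum>Rt\<in>lower_fillings t tb N. rweight x Rt * glued_weight x (hd Rt) (row_above Rs))"
proof -
  let ?F = "\<lambda>(Rt :: nat multiset list, AB :: nat multiset \<times> nat multiset). rweight x Rt * mweight x (fst AB + snd AB)"
  have finite_glued: "finite (glued_pairs T u)" for T u
    using finite_raised_pairs glued_sub_raised by (rule finite_subset[rotated])
  have bij: "bij_betw glue glue_dom glue_cod"
    using glue_inj glue_into glue_onto[OF overlap] by (intro bij_betw_imageI) blast+
  have "(\<Sum>Rt'\<in>lower_fillings (tl t) (tl tb) N.
      rweight x Rt' * middle_weight x (n + 1) (m - 1 + hd t) m 1 (hd (tl tb)) N Rs Rt') = (\<Sum>z\<in>glue_cod. ?F z)"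
    by (simp add: middle_weight_def sum_distrib_left sum.Sigma finite_lower_fillings finite_middle_pairs split_def)
  also have "\<dots> = (\<Sum>y\<in>glue_dom. ?F (glue y))"
    by (rule sum.reindex_bij_betw[OF bij, symmetric])
  also have "\<dots> = (\<Sum>y\<in>glue_dom. ?F y)"
    by (rule sum.cong) (auto simp: glue_def glue_weight)
  also have "\<dots> = (\<Sum>Rt\<in>lower_fillings t tb N. rweight x Rt * glued_weight x (hd Rt) (row_above Rs))"
    by (simp add: glued_weight_def sum_distrib_left sum.Sigma finite_lower_fillings finite_glued split_def)
  finally show ?thesis .
qed

end

end

lemma nth_middle2: "length Rs = s \<Longrightarrow> (Rs @ [A,B] @ Rt) ! i =
   (if i < s then Rs!i else if i = s then A else if i = Suc s then B else Rt ! (i - Suc (Suc s)))"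
  by (auto simp: nth_append nth_Cons' split: if_splits)

lemma nth_middle1: "length sb = s \<Longrightarrow> (sb @ [c] @ tb) ! i =
   (if i < s then sb!i else if i = s then c else tb ! (i - Suc s))"
  by (auto simp: nth_append nth_Cons' split: if_splits)

lemma ov_valid_middle:
  assumes L: "length sb = length s" "length tb = length t"
    and h1: "\<forall>i. i + 1 < length s \<longrightarrow> sb!i \<le> min (s!i) (s!(i+1))"
    and h2: "s \<noteq> [] \<Longrightarrow> last sb \<le> min (last s) p"
    and h3: "c \<le> min p q"
    and h4: "t \<noteq> [] \<Longrightarrow> hd tb \<le> min q (hd t)"
    and h5: "\<forall>i. 0 < i \<and> i < length t \<longrightarrow> tb!i \<le> min (t!i) (t!(i-1))"
  shows "ov_valid (s @ [p,q] @ t) (sb @ [c] @ tb)"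
  unfolding ov_valid_def
proof (intro conjI allI impI)
  show "length (sb @ [c] @ tb) + 1 = length (s @ [p,q] @ t)" using L by simp
next
  fix i assume i: "i < length (sb @ [c] @ tb)"
  define k where "k = length s"
  have na: "(s @ p # q # t) ! i = (if i < k then s!i else if i = k then p else if i = Suc k then q else t ! (i - Suc (Suc k)))" for i
    using nth_middle2[of s k p q t] k_def by simp
  have nb: "(sb @ c # tb) ! i = (if i < k then sb!i else if i = k then c else tb ! (i - Suc k))" for i
    using nth_middle1[of sb k c tb] L(1) k_def by simp
  have ik: "i < k + 1 + length t" using i L k_def by simp
  consider "Suc i < k" | "Suc i = k" | "i = k" | "i = Suc k" | "Suc (Suc k) \<le> i" by linarith
  then show "(sb @ [c] @ tb) ! i \<le> min ((s @ [p,q] @ t) ! i) ((s @ [p,q] @ t) ! (i + 1))"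
  proof cases
    case 1 then show ?thesis using h1 k_def by (simp add: na nb)
  next
    case 2
    have ne: "s \<noteq> []" "sb \<noteq> []" using 2 k_def L by auto
    have "i = length s - 1" using 2 k_def by simp
    then have "last s = s!i" "last sb = sb!i" using L ne by (auto simp: last_conv_nth)
    then show ?thesis using h2 2 ne by (simp add: na nb)
  next
    case 3 then show ?thesis using h3 by (simp add: na nb)
  next
    case 4
    then have ne: "t \<noteq> []" "tb \<noteq> []" using ik L by auto
    then have "hd t = t!0" "hd tb = tb!0" by (auto simp: hd_conv_nth)
    then show ?thesis using h4 4 ne by (simp add: na nb)
  next
    case 5
    define j where "j = i - Suc k"
    have j: "0 < j" "j < length t" "i = j + Suc k" using 5 ik by (auto simp: j_def)
    have "tb!j \<le> min (t!j) (t!(j-1))" using h5 j by blast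
    moreover have "i - Suc (Suc k) = j - 1" "Suc i - Suc (Suc k) = j" using j by auto
    ultimately show ?thesis using j by (simp add: na nb)
  qed
qed

lemma standing_hyp_valid:
  assumes sh: "standing_hyp \<sigma> \<sigma>b \<tau> \<tau>b" and "1 \<le> p" "c \<le> min p q" "\<tau> \<noteq> [] \<longrightarrow> 1 \<le> q"
  shows "ov_valid (\<sigma> @ [p,q] @ \<tau>) (\<sigma>b @ [c] @ \<tau>b)"
proof (rule ov_valid_middle)
  show "\<sigma> \<noteq> [] \<Longrightarrow> last \<sigma>b \<le> min (last \<sigma>) p" "\<tau> \<noteq> [] \<Longrightarrow> hd \<tau>b \<le> min q (hd \<tau>)"
    using sh assms(2,4) by (auto simp: standing_hyp_def)
qed (use sh assms(3) in \<open>auto simp: standing_hyp_def\<close>)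

lemma standing_hyp_tl:
  assumes sh: "standing_hyp \<sigma> \<sigma>b \<tau> \<tau>b" and ne: "\<tau> \<noteq> []"
  shows "\<forall>i. 0 < i \<and> i < length (tl \<tau>) \<longrightarrow> tl \<tau>b ! i \<le> min (tl \<tau> ! i) (tl \<tau> ! (i - 1))"
    and "tl \<tau> \<noteq> [] \<Longrightarrow> hd (tl \<tau>b) \<le> min (hd \<tau>) (hd (tl \<tau>))"
proof -
  have L: "length \<tau>b = length \<tau>"
    and h: "\<And>i. 0 < i \<Longrightarrow> i < length \<tau> \<Longrightarrow> \<tau>b ! i \<le> min (\<tau> ! i) (\<tau> ! (i - 1))"
    using sh by (auto simp: standing_hyp_def)
  obtain t0 t' where t: "\<tau> = t0 # t'" using ne by (cases \<tau>) auto
  obtain b0 b' where b: "\<tau>b = b0 # b'" using L t by (cases \<tau>b) auto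
  show "\<forall>i. 0 < i \<and> i < length (tl \<tau>) \<longrightarrow> tl \<tau>b ! i \<le> min (tl \<tau> ! i) (tl \<tau> ! (i - 1))"
  proof (intro allI impI)
    fix i assume i: "0 < i \<and> i < length (tl \<tau>)"
    then have "\<tau>b ! Suc i \<le> min (\<tau> ! Suc i) (\<tau> ! i)" using h[of "Suc i"] t by simp
    then show "tl \<tau>b ! i \<le> min (tl \<tau> ! i) (tl \<tau> ! (i - 1))" using i t b by (simp add: nth_Cons')
  qed
  show "tl \<tau> \<noteq> [] \<Longrightarrow> hd (tl \<tau>b) \<le> min (hd \<tau>) (hd (tl \<tau>))"
    using h[of 1] t b L by (cases t'; cases b') auto
qed

lemma lower_fillings_hd:
  assumes "standing_hyp \<sigma> \<sigma>b \<tau> \<tau>b" "\<tau> \<noteq> []" "Rt \<in> lower_fillings \<tau> \<tau>b N"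
  shows "Rt \<noteq> [] \<and> hd Rt \<noteq> {#} \<and> set_mset (hd Rt) \<subseteq> {1..N}"
proof -
  have F: "Rt \<in> fillings \<tau> (tl \<tau>b) N" using assms(2,3) by (simp add: lower_fillings_def)
  then have "Rt \<noteq> []" "hd Rt = Rt ! 0" using assms(2) by (cases Rt; auto simp: fillings_def)+
  moreover have "size (Rt ! 0) = \<tau> ! 0" "set_mset (Rt ! 0) \<subseteq> {1..N}"
    using F assms(2) by (auto simp: fillings_def)
  moreover have "1 \<le> \<tau> ! 0" using assms(1,2) by (simp add: standing_hyp_def hd_conv_nth[symmetric])
  ultimately show ?thesis by auto
qed

definition outer_sum :: "(nat \<Rightarrow> 'r::comm_ring_1) \<Rightarrow> nat \<Rightarrow> nat list \<Rightarrow> nat list \<Rightarrow> nat list \<Rightarrow> nat list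
    \<Rightarrow> (nat multiset list \<Rightarrow> nat multiset list \<Rightarrow> 'r) \<Rightarrow> 'r" where
  "outer_sum x N s sb t tb f = (\<Sum>Rs\<in>upper_fillings s sb N. \<Sum>Rt\<in>lower_fillings t tb N. rweight x Rs * rweight x Rt * f Rs Rt)"

lemma outer_sum_cong:
  "(\<And>Rs Rt. Rs \<in> upper_fillings s sb N \<Longrightarrow> Rt \<in> lower_fillings t tb N \<Longrightarrow> f Rs Rt = g Rs Rt) \<Longrightarrow>
    outer_sum x N s sb t tb f = outer_sum x N s sb t tb g"
  unfolding outer_sum_def by (intro sum.cong refl) simp

lemma outer_sum_add:
  "outer_sum x N s sb t tb (\<lambda>Rs Rt. f Rs Rt + g Rs Rt) = outer_sum x N s sb t tb f + outer_sum x N s sb t tb g"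
  unfolding outer_sum_def by (simp add: distrib_left sum.distrib)

lemma outer_sum_zero: "outer_sum x N s sb t tb (\<lambda>Rs Rt. 0) = 0"
  by (simp add: outer_sum_def)

lemma ov_schur_middle:
  fixes x :: "nat \<Rightarrow> 'r::comm_ring_1"
  assumes "ov_valid (s @ [p,q] @ t) (sb @ [c] @ tb)" "length sb = length s" "length tb = length t"
  shows "ov_schur (s @ [p,q] @ t) (sb @ [c] @ tb) N x
    = outer_sum x N s sb t tb (middle_weight x p q c (last sb) (hd tb) N)"
  using assms overlap_shape.skew_schur_fillings[of "s @ [p,q] @ t" "sb @ [c] @ tb" N x]
    fillings_middle_sum[OF assms(2,3)] by (simp add: ov_schur_def overlap_shape_def outer_sum_def)

lemma ov_schur_standing:
  fixes x :: "nat \<Rightarrow> 'r::comm_ring_1"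
  assumes sh: "standing_hyp \<sigma> \<sigma>b \<tau> \<tau>b" and "1 \<le> p" "c \<le> min p q" "\<tau> \<noteq> [] \<longrightarrow> 1 \<le> q"
  shows "ov_schur (\<sigma> @ [p,q] @ \<tau>) (\<sigma>b @ [c] @ \<tau>b) N x = outer_sum x N \<sigma> \<sigma>b \<tau> \<tau>b (middle_weight x p q c 1 1 N)"
proof -
  have ends: "\<sigma> \<noteq> [] \<longrightarrow> last \<sigma>b = 1" "\<tau> \<noteq> [] \<longrightarrow> hd \<tau>b = 1"
    and L: "length \<sigma>b = length \<sigma>" "length \<tau>b = length \<tau>" using sh by (auto simp: standing_hyp_def)
  show ?thesis unfolding ov_schur_middle[OF standing_hyp_valid[OF assms] L]
  proof (rule outer_sum_cong)
    fix Rs Rt assume Rs: "Rs \<in> upper_fillings \<sigma> \<sigma>b N" and Rt: "Rt \<in> lower_fillings \<tau> \<tau>b N"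
    show "middle_weight x p q c (last \<sigma>b) (hd \<tau>b) N Rs Rt = middle_weight x p q c 1 1 N Rs Rt"
      unfolding middle_weight_def middle_pairs_upper_1[OF Rs ends(1)] middle_pairs_lower_1[OF Rt ends(2)] ..
  qed
qed

(* If the second middle row is empty while tau is not, the shape is not valid and no middle
   pair exists, so the formula of ov_schur_standing still holds (both sides vanish). *)
lemma ov_schur_empty_row:
  fixes x :: "nat \<Rightarrow> 'r::comm_ring_1"
  assumes sh: "standing_hyp \<sigma> \<sigma>b \<tau> \<tau>b" and ne: "\<tau> \<noteq> []"
  shows "ov_schur (\<sigma> @ [p, 0] @ \<tau>) (\<sigma>b @ [0] @ \<tau>b) N x = outer_sum x N \<sigma> \<sigma>b \<tau> \<tau>b (middle_weight x p 0 0 1 1 N)"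
proof -
  have L: "length \<sigma>b = length \<sigma>" "length \<tau>b = length \<tau>" and hd1: "hd \<tau>b = 1"
    using sh ne by (auto simp: standing_hyp_def)
  have "\<not> ov_valid (\<sigma> @ [p, 0] @ \<tau>) (\<sigma>b @ [0] @ \<tau>b)"
  proof
    assume valid: "ov_valid (\<sigma> @ [p, 0] @ \<tau>) (\<sigma>b @ [0] @ \<tau>b)"
    have "(\<sigma>b @ [0] @ \<tau>b) ! Suc (length \<sigma>) = 1" "(\<sigma> @ [p, 0] @ \<tau>) ! Suc (length \<sigma>) = 0"
      using L ne hd1 by (cases \<tau>b; simp add: nth_append)+
    moreover have "Suc (length \<sigma>) < length (\<sigma>b @ [0] @ \<tau>b)" using L ne by simp
    note valid[unfolded ov_valid_def, THEN conjunct2, rule_format, OF this]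
    ultimately show False by simp
  qed
  moreover have "outer_sum x N \<sigma> \<sigma>b \<tau> \<tau>b (middle_weight x p 0 0 1 1 N) = outer_sum x N \<sigma> \<sigma>b \<tau> \<tau>b (\<lambda>Rs Rt. 0)"
  proof (rule outer_sum_cong)
    fix Rs Rt assume "Rt \<in> lower_fillings \<tau> \<tau>b N"
    then have "middle_pairs p 0 0 1 1 N Rs Rt = {}"
      using lower_fillings_hd[OF sh ne] not_col_strict_empty[of "hd Rt" N] by (auto simp: middle_pairs_def)
    then show "middle_weight x p 0 0 1 1 N Rs Rt = 0" by (simp add: middle_weight_def)
  qed
  ultimately show ?thesis by (simp add: ov_schur_def outer_sum_zero)
qed

context two_rows
begin

(* The second term.  When m = 1 and tau is nonempty its shape is not valid, but the formula
   still holds by ov_schur_empty_row. *)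
lemma ov_schur_second:
  fixes x :: "nat \<Rightarrow> 'r::comm_ring_1"
  assumes sh: "standing_hyp \<sigma> \<sigma>b \<tau> \<tau>b"
  shows "ov_schur (\<sigma> @ [n + 1, m - 1] @ \<tau>) (\<sigma>b @ [m - 1] @ \<tau>b) N x
    = outer_sum x N \<sigma> \<sigma>b \<tau> \<tau>b (middle_weight x (n + 1) (m - 1) (m - 1) 1 1 N)"
proof (cases "m = 1 \<and> \<tau> \<noteq> []")
  case True then show ?thesis using ov_schur_empty_row[OF sh] by simp
next
  case False show ?thesis by (rule ov_schur_standing[OF sh]) (use False mpos mn in auto)
qed

lemma outer_sum_middle_split:
  fixes x :: "nat \<Rightarrow> 'r::comm_ring_1"
  assumes sh: "standing_hyp \<sigma> \<sigma>b \<tau> \<tau>b"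
  shows "outer_sum x N \<sigma> \<sigma>b \<tau> \<tau>b (middle_weight x m n (m - 1) 1 1 N)
    = outer_sum x N \<sigma> \<sigma>b \<tau> \<tau>b (middle_weight x m n m 1 1 N)
    + outer_sum x N \<sigma> \<sigma>b \<tau> \<tau>b (middle_weight x (n + 1) (m - 1) (m - 1) 1 1 N)
    + outer_sum x N \<sigma> \<sigma>b \<tau> \<tau>b (\<lambda>Rs Rt. if Rt = [] then 0 else glued_weight x (hd Rt) (row_above Rs))"
  unfolding outer_sum_add[symmetric]
proof (rule outer_sum_cong)
  fix Rs Rt assume Rt: "Rt \<in> lower_fillings \<tau> \<tau>b N"
  show "middle_weight x m n (m - 1) 1 1 N Rs Rt = middle_weight x m n m 1 1 N Rs Rt
    + middle_weight x (n + 1) (m - 1) (m - 1) 1 1 N Rs Rt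
    + (if Rt = [] then 0 else glued_weight x (hd Rt) (row_above Rs))"
  proof (rule middle_weight_split)
    assume "Rt \<noteq> []"
    then have "\<tau> \<noteq> []" using Rt by (auto simp: lower_fillings_def)
    then show "hd Rt \<noteq> {#} \<and> set_mset (hd Rt) \<subseteq> {1..N}" using lower_fillings_hd[OF sh _ Rt] by blast
  qed
qed

lemma outer_sum_glued:
  fixes x :: "nat \<Rightarrow> 'r::comm_ring_1"
  assumes sh: "standing_hyp \<sigma> \<sigma>b \<tau> \<tau>b"
  shows "outer_sum x N \<sigma> \<sigma>b \<tau> \<tau>b (\<lambda>Rs Rt. if Rt = [] then 0 else glued_weight x (hd Rt) (row_above Rs))
    = (if \<tau> = [] then 0 else ov_schur (\<sigma> @ [n + 1, m - 1 + hd \<tau>] @ tl \<tau>) (\<sigma>b @ [m] @ tl \<tau>b) N x)"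
proof (cases "\<tau> = []")
  case True then show ?thesis by (simp add: outer_sum_def lower_fillings_def)
next
  case ne: False
  have L: "length \<sigma>b = length \<sigma>" "length (tl \<tau>b) = length (tl \<tau>)" "length \<tau>b = length \<tau>"
    and last1: "\<sigma> \<noteq> [] \<longrightarrow> last \<sigma>b = 1" and pos: "1 \<le> hd \<tau>" "\<sigma> \<noteq> [] \<Longrightarrow> 1 \<le> last \<sigma>"
    using sh ne by (auto simp: standing_hyp_def)
  have overlap: "tl \<tau> \<noteq> [] \<longrightarrow> hd (tl \<tau>b) \<le> hd \<tau>" using standing_hyp_tl(2)[OF sh ne] by simp
  have valid: "ov_valid (\<sigma> @ [n + 1, m - 1 + hd \<tau>] @ tl \<tau>) (\<sigma>b @ [m] @ tl \<tau>b)"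
    using sh standing_hyp_tl[OF sh ne] L last1 pos mn mpos
    by (intro ov_valid_middle) (auto simp: standing_hyp_def)
  have "ov_schur (\<sigma> @ [n + 1, m - 1 + hd \<tau>] @ tl \<tau>) (\<sigma>b @ [m] @ tl \<tau>b) N x
    = (\<Sum>Rs\<in>upper_fillings \<sigma> \<sigma>b N. rweight x Rs * (\<Sum>Rt'\<in>lower_fillings (tl \<tau>) (tl \<tau>b) N.
         rweight x Rt' * middle_weight x (n + 1) (m - 1 + hd \<tau>) m 1 (hd (tl \<tau>b)) N Rs Rt'))"
    unfolding ov_schur_middle[OF valid L(1,2)] outer_sum_def sum_distrib_left
    by (intro sum.cong refl) (simp add: middle_weight_def middle_pairs_upper_1[OF _ last1] mult_ac)
  also have "\<dots> = (\<Sum>Rs\<in>upper_fillings \<sigma> \<sigma>b N. rweight x Rs * (\<Sum>Rt\<in>lower_fillings \<tau> \<tau>b N.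
         rweight x Rt * glued_weight x (hd Rt) (row_above Rs)))"
    unfolding sum_glued_pairs[OF ne L(3) overlap] ..
  also have "\<dots> = outer_sum x N \<sigma> \<sigma>b \<tau> \<tau>b (\<lambda>Rs Rt. if Rt = [] then 0 else glued_weight x (hd Rt) (row_above Rs))"
    using lower_fillings_hd[OF sh ne] by (auto simp: outer_sum_def sum_distrib_left mult_ac intro!: sum.cong)
  finally show ?thesis using ne by simp
qed

end

theorem corollary2p9:
  fixes \<sigma> \<sigma>b \<tau> \<tau>b :: "nat list" and m n N :: nat and x :: "nat \<Rightarrow> 'r::comm_ring_1"
  assumes "standing_hyp \<sigma> \<sigma>b \<tau> \<tau>b" and "0 < m" and "m \<le> n"
  shows "ov_schur (\<sigma> @ [m, n] @ \<tau>) (\<sigma>b @ [m - 1] @ \<tau>b) N x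
           - ov_schur (\<sigma> @ [n + 1, m - 1] @ \<tau>) (\<sigma>b @ [m - 1] @ \<tau>b) N x
         = ov_schur (\<sigma> @ [m, n] @ \<tau>) (\<sigma>b @ [m] @ \<tau>b) N x
           + (if \<tau> = [] then 0
              else ov_schur (\<sigma> @ [n + 1, m - 1 + hd \<tau>] @ tl \<tau>) (\<sigma>b @ [m] @ tl \<tau>b) N x)"
proof -
  interpret two_rows m n N using assms(2,3) by unfold_locales
  let ?O = "outer_sum x N \<sigma> \<sigma>b \<tau> \<tau>b"
  have first: "ov_schur (\<sigma> @ [m, n] @ \<tau>) (\<sigma>b @ [m - 1] @ \<tau>b) N x = ?O (middle_weight x m n (m - 1) 1 1 N)"
    and third: "ov_schur (\<sigma> @ [m, n] @ \<tau>) (\<sigma>b @ [m] @ \<tau>b) N x = ?O (middle_weight x m n m 1 1 N)"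
    by (rule ov_schur_standing[OF assms(1)]; use assms in simp)+
  show ?thesis
    unfolding first third ov_schur_second[OF assms(1)] outer_sum_middle_split[OF assms(1)]
      outer_sum_glued[OF assms(1)] by (simp add: algebra_simps)
qed

end
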